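(* Let $\alpha<_c\beta$ with $\beta/\!\!/\alpha$ an nc border strip with $n$ boxes. Then $$\sum_{\substack{w\in CRHW_n\\ w(\alpha)=\beta}}(-1)^{\mathrm{asc}(w)}=(-1)^{\,n-1-|E(\beta/\!\!/\alpha)|}\,\delta_{0,|NE(\beta/\!\!/\alpha)|},$$ where $\delta$ is the Kronecker delta.
   Context: A composition is a finite sequence $\alpha=(\alpha_1,\dots,\alpha_k)$ of positive integers; $\ell(\alpha)=k$; its diagram is the set of boxes $(i,j)$, $1\le i\le\ell(\alpha)$, $1\le j\le\alpha_i$, rows top to bottom, columns left to right. For compositions $\gamma=(\gamma_1,\dots,\gamma_l)$, $\delta$ write $\gamma\lessdot_c\delta$ if $\delta=(1,\gamma_1,\dots,\gamma_l)$ or $\delta=(\gamma_1,\dots,\gamma_k+1,\dots,\gamma_l)$ with $\gamma_i\ne\gamma_k$ for all $i<k$; $<_c$ is the transitive closure. For $\gamma<_c\delta$, $\delta/\!\!/\gamma$ consists of the boxes of $\delta$ other than $(\ell(\delta)-\ell(\gamma)+i,j)$, $1\le i\le\ell(\gamma)$, $1\le j\le\gamma_i$. $\mathrm{supp}(\beta/\!\!/\alpha)$ is the set of columns containing a box of $\beta/\!\!/\alpha$; interval shape: supp is a set of consecutive integers. nc border strip: an interval shape such that (1) if $(i,1),(i,2)\in\beta/\!\!/\alpha$ then $(i,1)$ is the bottommost box of column 1 of $\beta/\!\!/\alpha$, and (2) if $(i,j),(i,j+1)\in\beta/\!\!/\alpha$ with $j\ge2$ then $(i,j)$ is the topmost box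 of column $j$ of $\beta/\!\!/\alpha$. $E(\beta/\!\!/\alpha)$ is the set of $j$ such that $(i,j),(i,j+1)\in\beta/\!\!/\alpha$ for some $i$. $NE(\beta/\!\!/\alpha)$ is the set of $j\in\mathrm{supp}(\beta/\!\!/\alpha)$ such that column $j+1$ of $\beta/\!\!/\alpha$ contains at least one box and $i_1<i_2$ for all boxes $(i_1,j+1),(i_2,j)\in\beta/\!\!/\alpha$. Box-adding operators: $\mathfrak t_1(\alpha)=(1,\alpha_1,\dots,\alpha_k)$; for $i\ge2$, $\mathfrak t_i(\alpha)$ increases the leftmost part equal to $i-1$ by $1$, and is $0$ if none; $\mathfrak t_i(0)=0$. A word $w=\mathfrak t_{i_1}\cdots\mathfrak t_{i_n}$ (distinct sequences are distinct words) acts by $w(\alpha)=\mathfrak t_{i_1}(\cdots\mathfrak t_{i_n}(\alpha))$; it is a reverse $k$-hookword if $i_1\le\cdots\le i_{k+1}>i_{k+2}>\cdots>i_n$ ($0\le k\le n-1$, uniquely determined), and then $\mathrm{asc}(w)=k$. It is connected if $\{i_1,\dots,i_n\}$ is a set of consecutive integers; $CRHW_n$ is the set of connected reverse hookwords of length $n$. *)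

theory Defs
  imports Main
begin

text \<open>Compositions are lists of positive naturals; rows/columns of diagrams are 1-indexed.\<close>

definition is_composition :: "nat list \<Rightarrow> bool" where
  "is_composition \<alpha> \<longleftrightarrow> (\<forall>x\<in>set \<alpha>. 0 < x)"

definition comp_cover :: "nat list \<Rightarrow> nat list \<Rightarrow> bool" where
  "comp_cover \<gamma> \<delta> \<longleftrightarrow>
     \<delta> = 1 # \<gamma> \<or>
     (\<exists>k < length \<gamma>. \<delta> = \<gamma>[k := \<gamma> ! k + 1] \<and> (\<forall>i < k. \<gamma> ! i \<noteq> \<gamma> ! k))"

definition comp_less :: "nat list \<Rightarrow> nat list \<Rightarrow> bool" where
  "comp_less = tranclp comp_cover"

definition diagram :: "nat list \<Rightarrow> (nat \<times> nat) set" where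
  "diagram \<beta> = {(i, j). 1 \<le> i \<and> i \<le> length \<beta> \<and> 1 \<le> j \<and> j \<le> \<beta> ! (i - 1)}"

text \<open>The skew shape beta // alpha (alpha bottom-justified inside beta).\<close>
definition skew :: "nat list \<Rightarrow> nat list \<Rightarrow> (nat \<times> nat) set" where
  "skew \<beta> \<alpha> = diagram \<beta> -
     {(length \<beta> - length \<alpha> + i, j) | i j.
        1 \<le> i \<and> i \<le> length \<alpha> \<and> 1 \<le> j \<and> j \<le> \<alpha> ! (i - 1)}"

definition supp :: "(nat \<times> nat) set \<Rightarrow> nat set" where
  "supp S = snd ` S"

definition interval_shape :: "(nat \<times> nat) set \<Rightarrow> bool" where
  "interval_shape S \<longleftrightarrow> (\<exists>a b. supp S = {a..b})"

definition nc_border_strip :: "(nat \<times> nat) set \<Rightarrow> bool" where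
  "nc_border_strip S \<longleftrightarrow> interval_shape S \<and>
     (\<forall>i. (i, 1) \<in> S \<and> (i, 2) \<in> S \<longrightarrow> i = Max {i'. (i', 1) \<in> S}) \<and>
     (\<forall>i j. 2 \<le> j \<and> (i, j) \<in> S \<and> (i, j + 1) \<in> S \<longrightarrow> i = Min {i'. (i', j) \<in> S})"

definition E_set :: "(nat \<times> nat) set \<Rightarrow> nat set" where
  "E_set S = {j. \<exists>i. (i, j) \<in> S \<and> (i, j + 1) \<in> S}"

definition NE_set :: "(nat \<times> nat) set \<Rightarrow> nat set" where
  "NE_set S = {j \<in> supp S. (\<exists>i. (i, j + 1) \<in> S) \<and>
                 (\<forall>i1 i2. (i1, j + 1) \<in> S \<and> (i2, j) \<in> S \<longrightarrow> i1 < i2)}"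

text \<open>Box-adding operators; None represents the zero result.\<close>
definition box_op :: "nat \<Rightarrow> nat list \<Rightarrow> nat list option" where
  "box_op i \<alpha> =
     (if i = 1 then Some (1 # \<alpha>)
      else if (\<exists>k < length \<alpha>. \<alpha> ! k = i - 1)
      then (let k = (LEAST k. k < length \<alpha> \<and> \<alpha> ! k = i - 1) in Some (\<alpha>[k := i]))
      else None)"

text \<open>w = t_{i1} ... t_{in} acts by applying t_{in} first.\<close>
definition word_act :: "nat list \<Rightarrow> nat list \<Rightarrow> nat list option" where
  "word_act w \<alpha> = foldr (\<lambda>i acc. Option.bind acc (box_op i)) w (Some \<alpha>)"

text \<open>Reverse k-hookword (0-indexed: w!0 <= ... <= w!k > w!(k+1) > ... > w!(n-1)).\<close>
definition is_rev_hookword :: "nat list \<Rightarrow> nat \<Rightarrow> bool" where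
  "is_rev_hookword w k \<longleftrightarrow> k < length w \<and>
     (\<forall>j. j < k \<longrightarrow> w ! j \<le> w ! (j + 1)) \<and>
     (\<forall>j. k \<le> j \<and> j + 1 < length w \<longrightarrow> w ! j > w ! (j + 1))"

definition asc :: "nat list \<Rightarrow> nat" where
  "asc w = (THE k. is_rev_hookword w k)"

definition CRHW :: "nat \<Rightarrow> nat list set" where
  "CRHW n = {w. length w = n \<and> (\<forall>i\<in>set w. 1 \<le> i) \<and>
                (\<exists>a b. set w = {a..b}) \<and> (\<exists>k. is_rev_hookword w k)}"

end

theory Submission
  imports Defs "HOL-Library.Multiset"
begin

text \<open>A connected reverse hookword with \<open>w(\<alpha>) = \<beta>\<close> is determined by its set \<open>D\<close> of descent
  letters: it is the weakly increasing word containing every column \<open>j\<close> of \<open>\<beta>//\<alpha>\<close> as often as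
  that column has boxes, minus one if \<open>j \<in> D\<close>, followed by \<open>D\<close> in decreasing order. Acting first,
  the letters of \<open>D\<close> add, in increasing order, the boxes where the strip continues to the right;
  the increasing part then completes the rows column by column from right to left. For an nc
  border strip this succeeds exactly when \<open>E \<subseteq> D \<subseteq> E \<union> NE\<close>, and then \<open>asc w = n - 1 - |D|\<close>.
  So the sum is \<open>(-1)^(n - 1 - |E|)\<close> times the sum of \<open>(-1)^|X|\<close> over all \<open>X \<subseteq> NE\<close>,
  which vanishes unless \<open>NE = {}\<close>.\<close>

section \<open>Box operators on zero-padded compositions\<close>

definition pad :: "nat \<Rightarrow> nat list \<Rightarrow> nat list" where
  "pad k \<gamma> = replicate k 0 @ \<gamma>"

text \<open>On a composition padded with zeros to a fixed number of rows, \<open>t\<^sub>1\<close> turns the last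
  zero into a one instead of prepending a part, so that every row keeps its position.\<close>

definition bump :: "nat \<Rightarrow> nat list \<Rightarrow> nat list option" where
  "bump j s =
     (if j = 0 then None
      else if j = 1 then
        (if \<exists>i<length s. s ! i = 0
         then Some (s[(GREATEST i. i < length s \<and> s ! i = 0) := 1]) else None)
      else
        (if \<exists>i<length s. s ! i = j - 1
         then Some (s[(LEAST i. i < length s \<and> s ! i = j - 1) := j]) else None))"

fun bumps :: "nat list \<Rightarrow> nat list \<Rightarrow> nat list option" where
  "bumps [] s = Some s"
| "bumps (c # cs) s = Option.bind (bump c s) (bumps cs)"

lemma bumps_append: "bumps (xs @ ys) s = Option.bind (bumps xs s) (bumps ys)"
  by (induction xs arbitrary: s) (auto split: Option.bind_split)

lemma bumps_ConsE:
  assumes "bumps (c # cs) s = Some t"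
  obtains u where "bump c s = Some u" "bumps cs u = Some t"
  using assms by (cases "bump c s") auto

lemma bumps_appendE:
  assumes "bumps (xs @ ys) s = Some t"
  obtains u where "bumps xs s = Some u" "bumps ys u = Some t"
  using assms by (cases "bumps xs s") (auto simp: bumps_append)

lemma bump_SomeD:
  assumes "bump c s = Some t"
  shows "1 \<le> c \<and> length t = length s \<and>
    (\<exists>r<length s. s ! r = c - 1 \<and> t = s[r := c]
       \<and> (c = 1 \<longrightarrow> (\<forall>i<length s. s ! i = 0 \<longrightarrow> i \<le> r))
       \<and> (c \<noteq> 1 \<longrightarrow> (\<forall>i<length s. s ! i = c - 1 \<longrightarrow> r \<le> i)))"
proof (cases "c = 1")
  case True
  let ?P = "\<lambda>i. i < length s \<and> s ! i = 0"
  from assms True obtain i where "?P i" and t: "t = s[(GREATEST i. ?P i) := 1]"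
    by (auto simp: bump_def split: if_splits)
  moreover have "\<And>y. ?P y \<Longrightarrow> y \<le> length s" by simp
  ultimately show ?thesis
    using True GreatestI_nat[of ?P i "length s"] Greatest_le_nat[of ?P _ "length s"] by auto
next
  case False
  let ?P = "\<lambda>i. i < length s \<and> s ! i = c - 1"
  from assms False have "c \<noteq> 0" and ex: "\<exists>i. ?P i" and t: "t = s[(LEAST i. ?P i) := c]"
    by (auto simp: bump_def split: if_splits)
  then show ?thesis
    using False LeastI_ex[OF ex] Least_le[of ?P] by auto
qed

lemma bump_exists: "1 \<le> c \<Longrightarrow> i < length s \<Longrightarrow> s ! i = c - 1 \<Longrightarrow> \<exists>t. bump c s = Some t"
  by (auto simp: bump_def)

lemma bumps_grow:
  "bumps cs s = Some t \<Longrightarrow> length t = length s \<and> (\<forall>i<length s. s ! i \<le> t ! i)"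
proof (induction cs arbitrary: s)
  case (Cons c cs)
  from Cons.prems(1) obtain u where u: "bump c s = Some u" "bumps cs u = Some t"
    by (rule bumps_ConsE)
  obtain r where "r < length s" "s ! r = c - 1" "u = s[r := c]" "length u = length s"
    using bump_SomeD[OF u(1)] by blast
  then have "\<forall>i<length s. s ! i \<le> u ! i" by (auto simp: nth_list_update)
  then show ?case using Cons.IH[OF u(2)] \<open>length u = length s\<close> by fastforce
qed simp

lemma bumps_nth_unchanged:
  "bumps cs s = Some t \<Longrightarrow> i < length s \<Longrightarrow> Suc (s ! i) \<notin> set cs \<Longrightarrow> t ! i = s ! i"
proof (induction cs arbitrary: s)
  case (Cons c cs)
  from Cons.prems(1) obtain u where u: "bump c s = Some u" "bumps cs u = Some t"
    by (rule bumps_ConsE)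
  obtain r where "r < length s" "s ! r = c - 1" "u = s[r := c]" "1 \<le> c" "length u = length s"
    using bump_SomeD[OF u(1)] by blast
  with Cons.prems have "u ! i = s ! i" by (auto simp: nth_list_update)
  then show ?case using Cons.IH[OF u(2)] Cons.prems \<open>length u = length s\<close> by auto
qed simp

lemma bumps_nth_less:
  "bumps cs s = Some t \<Longrightarrow> i < length s \<Longrightarrow> j \<notin> set cs \<Longrightarrow> s ! i < j \<Longrightarrow> t ! i < j"
proof (induction cs arbitrary: s)
  case (Cons c cs)
  from Cons.prems(1) obtain u where u: "bump c s = Some u" "bumps cs u = Some t"
    by (rule bumps_ConsE)
  obtain r where "r < length s" "s ! r = c - 1" "u = s[r := c]" "length u = length s"
    using bump_SomeD[OF u(1)] by blast
  with Cons.prems have "u ! i < j" by (auto simp: nth_list_update)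
  then show ?case using Cons.IH[OF u(2)] Cons.prems \<open>length u = length s\<close> by auto
qed simp

text \<open>Along a weakly decreasing word a row gains at most one box: after it has received the
  letter \<open>c\<close>, the letter \<open>c + 1\<close> that could extend it never comes.\<close>

lemma bumps_nth_le_Suc:
  "bumps cs s = Some t \<Longrightarrow> i < length s \<Longrightarrow> sorted (rev cs) \<Longrightarrow> t ! i \<le> Suc (s ! i)"
proof (induction cs arbitrary: s)
  case (Cons c cs)
  from Cons.prems(1) obtain u where u: "bump c s = Some u" "bumps cs u = Some t"
    by (rule bumps_ConsE)
  obtain r where r: "r < length s" "s ! r = c - 1" "u = s[r := c]" "1 \<le> c" "length u = length s"
    using bump_SomeD[OF u(1)] by blast
  have cs: "sorted (rev cs)" "\<forall>x\<in>set cs. x \<le> c"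
    using Cons.prems(3) by (auto simp: sorted_append)
  show ?case
  proof (cases "r = i")
    case True
    then have "u ! i = c" using r Cons.prems by simp
    moreover have "t ! i = u ! i"
      using bumps_nth_unchanged[OF u(2)] r Cons.prems cs \<open>u ! i = c\<close> by fastforce
    ultimately show ?thesis using r True by simp
  next
    case False
    then have "u ! i = s ! i" using r by simp
    then show ?thesis using Cons.IH[OF u(2)] cs r Cons.prems by auto
  qed
qed simp

text \<open>If row \<open>r\<close> keeps the length \<open>v\<close> throughout, a lower row of length at most \<open>v\<close> never
  exceeds \<open>v\<close>: the letter \<open>v + 1\<close> always acts on the topmost row of length \<open>v\<close>.\<close>

lemma bumps_nth_le_below:
  assumes "bumps cs s = Some t" "r < i" "i < length s" "s ! r = v" "t ! r = v" "1 \<le> v" "s ! i \<le> v"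
  shows "t ! i \<le> v"
  using assms
proof (induction cs arbitrary: s)
  case (Cons c cs)
  from Cons.prems(1) obtain u where u: "bump c s = Some u" "bumps cs u = Some t"
    by (rule bumps_ConsE)
  obtain q where q: "q < length s" "s ! q = c - 1" "u = s[q := c]" "length u = length s"
    "\<And>i. c \<noteq> 1 \<Longrightarrow> i < length s \<Longrightarrow> s ! i = c - 1 \<Longrightarrow> q \<le> i"
    using bump_SomeD[OF u(1)] by blast
  have "s ! r \<le> u ! r" "u ! r \<le> t ! r"
    using q Cons.prems bumps_grow[OF u(2)] by (auto simp: nth_list_update)
  then have ur: "u ! r = v" using Cons.prems by simp
  have "u ! i \<le> v"
  proof (cases "q = i")
    case True
    have "c - 1 \<noteq> v"
    proof
      assume "c - 1 = v"
      then have "q \<le> r" using q(5) Cons.prems by fastforce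
      with True Cons.prems show False by simp
    qed
    then show ?thesis using q True Cons.prems by auto
  next
    case False
    then show ?thesis using q Cons.prems by auto
  qed
  then show ?case using Cons.IH[OF u(2)] Cons.prems q ur by auto
qed simp

lemma card_bumps_ge:
  assumes "bumps cs s = Some t" "1 \<le> j"
  shows "card {i. i < length s \<and> j \<le> t ! i} = card {i. i < length s \<and> j \<le> s ! i} + count_list cs j"
  using assms
proof (induction cs arbitrary: s)
  case (Cons c cs)
  from Cons.prems(1) obtain u where u: "bump c s = Some u" "bumps cs u = Some t"
    by (rule bumps_ConsE)
  obtain r where r: "r < length s" "s ! r = c - 1" "u = s[r := c]" "1 \<le> c" "length u = length s"
    using bump_SomeD[OF u(1)] by blast
  have "{i. i < length s \<and> j \<le> u ! i} =
      (if c = j then insert r {i. i < length s \<and> j \<le> s ! i} else {i. i < length s \<and> j \<le> s ! i})"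
    using r by (auto simp: nth_list_update)
  moreover have "c = j \<Longrightarrow> r \<notin> {i. i < length s \<and> j \<le> s ! i}" using r by auto
  ultimately show ?case using Cons.IH[OF u(2) Cons.prems(2)] r by auto
qed simp

lemma box_op_composition:
  assumes "is_composition \<gamma>" "box_op c \<gamma> = Some \<gamma>'"
  shows "is_composition \<gamma>' \<and> length \<gamma>' = length \<gamma> + (if c = 1 then 1 else 0)"
proof (cases "c = 1")
  case True
  then show ?thesis using assms by (auto simp: box_op_def is_composition_def)
next
  case False
  let ?P = "\<lambda>k. k < length \<gamma> \<and> \<gamma> ! k = c - 1"
  from False assms(2) have ex: "\<exists>k. ?P k" and \<gamma>': "\<gamma>' = \<gamma>[(LEAST k. ?P k) := c]"
    by (auto simp: box_op_def Let_def split: if_splits)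
  have "c \<noteq> 0"
    using assms(1) LeastI_ex[OF ex] nth_mem[of "LEAST k. ?P k" \<gamma>] by (auto simp: is_composition_def)
  then show ?thesis using assms(1) \<gamma>' False
    by (auto simp: is_composition_def dest!: set_update_subset_insert[THEN subsetD])
qed

lemma word_act_snoc: "word_act (w @ [c]) \<gamma> = Option.bind (box_op c \<gamma>) (word_act w)"
proof -
  have "foldr (\<lambda>i acc. Option.bind acc (box_op i)) w x = Option.bind x (word_act w)" for x
    by (induction w) (auto simp: word_act_def split: Option.bind_split)
  then show ?thesis by (simp add: word_act_def)
qed

lemma bump_one_pad:
  assumes "is_composition \<gamma>"
  shows "bump 1 (pad k \<gamma>) = (if k = 0 then None else Some (pad (k - 1) (1 # \<gamma>)))"
proof -
  have zero: "i < length (pad k \<gamma>) \<Longrightarrow> pad k \<gamma> ! i = 0 \<longleftrightarrow> i < k" for i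
    using assms nth_mem[of "i - k" \<gamma>] by (auto simp: pad_def nth_append is_composition_def)
  show ?thesis
  proof (cases "k = 0")
    case False
    have "(GREATEST i. i < length (pad k \<gamma>) \<and> pad k \<gamma> ! i = 0) = k - 1"
      using zero False by (intro Greatest_equality) (auto simp: pad_def)
    moreover have "(pad k \<gamma>)[k - 1 := 1] = pad (k - 1) (1 # \<gamma>)"
      using False by (cases k) (auto simp: pad_def list_update_append simp flip: replicate_append_same)
    ultimately show ?thesis using zero False by (auto simp: bump_def pad_def)
  qed (use zero in \<open>auto simp: bump_def\<close>)
qed

lemma bump_pad_ge2:
  assumes "2 \<le> c"
  shows "bump c (pad k \<gamma>) = map_option (pad k) (box_op c \<gamma>)"
proof -
  have off: "pad k \<gamma> ! i = c - 1 \<longleftrightarrow> k \<le> i \<and> \<gamma> ! (i - k) = c - 1"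
    if "i < length (pad k \<gamma>)" for i
    using assms that by (auto simp: pad_def nth_append)
  show ?thesis
  proof (cases "\<exists>i<length \<gamma>. \<gamma> ! i = c - 1")
    case False
    with off assms show ?thesis by (auto simp: bump_def box_op_def pad_def)
  next
    case True
    define l where "l = (LEAST i. i < length \<gamma> \<and> \<gamma> ! i = c - 1)"
    have l: "l < length \<gamma>" "\<gamma> ! l = c - 1" "\<And>i. i < length \<gamma> \<Longrightarrow> \<gamma> ! i = c - 1 \<Longrightarrow> l \<le> i"
      using LeastI_ex[OF True] Least_le[of "\<lambda>i. i < length \<gamma> \<and> \<gamma> ! i = c - 1"]
      unfolding l_def by auto
    have "(LEAST i. i < length (pad k \<gamma>) \<and> pad k \<gamma> ! i = c - 1) = k + l"
    proof (rule Least_equality)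
      show "k + l < length (pad k \<gamma>) \<and> pad k \<gamma> ! (k + l) = c - 1"
        using l by (simp add: pad_def nth_append)
      show "k + l \<le> y" if "y < length (pad k \<gamma>) \<and> pad k \<gamma> ! y = c - 1" for y
      proof -
        from that off[of y] have "k \<le> y" "y - k < length \<gamma>" "\<gamma> ! (y - k) = c - 1"
          by (auto simp: pad_def)
        then show ?thesis using l(3)[of "y - k"] by linarith
      qed
    qed
    moreover have "(pad k \<gamma>)[k + l := c] = pad k (\<gamma>[l := c])"
      by (simp add: pad_def list_update_append)
    moreover have "\<exists>i<length (pad k \<gamma>). pad k \<gamma> ! i = c - 1"
      using l by (auto simp: pad_def nth_append intro!: exI[of _ "k + l"])
    ultimately show ?thesis using True assms by (simp add: bump_def box_op_def Let_def l_def)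
  qed
qed

lemma bump_pad:
  assumes "is_composition \<gamma>" "1 \<le> c"
  shows "bump c (pad k \<gamma>) = (case box_op c \<gamma> of None \<Rightarrow> None
     | Some \<gamma>' \<Rightarrow> if c = 1 \<and> k = 0 then None else Some (pad (if c = 1 then k - 1 else k) \<gamma>'))"
proof (cases "c = 1")
  case True
  then show ?thesis using bump_one_pad[OF assms(1)] by (simp add: box_op_def)
next
  case False
  then show ?thesis using bump_pad_ge2[of c] assms(2) by (cases "box_op c \<gamma>") auto
qed

lemma bumps_pad:
  assumes "is_composition \<gamma>" "\<forall>c\<in>set cs. 1 \<le> c"
  shows "bumps cs (pad k \<gamma>) = (case word_act (rev cs) \<gamma> of None \<Rightarrow> None
     | Some \<gamma>' \<Rightarrow> if count_list cs 1 \<le> k then Some (pad (k - count_list cs 1) \<gamma>') else None)"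
  using assms
proof (induction cs arbitrary: k \<gamma>)
  case (Cons c cs)
  show ?case
  proof (cases "box_op c \<gamma>")
    case None
    then show ?thesis using bump_pad[OF Cons.prems(1), of c k] Cons.prems
      by (simp add: word_act_snoc)
  next
    case (Some \<gamma>1)
    have "is_composition \<gamma>1" using box_op_composition[OF Cons.prems(1) Some] by simp
    note IH = Cons.IH[OF this, of "if c = 1 then k - 1 else k"]
    show ?thesis using bump_pad[OF Cons.prems(1), of c k] Cons.prems Some IH
      by (auto simp: word_act_snoc split: option.splits)
  qed
qed (simp add: word_act_def)

lemma word_act_rev_composition:
  "is_composition \<gamma> \<Longrightarrow> word_act (rev cs) \<gamma> = Some \<gamma>' \<Longrightarrow>
    is_composition \<gamma>' \<and> length \<gamma>' = length \<gamma> + count_list cs 1"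
proof (induction cs arbitrary: \<gamma>)
  case Nil then show ?case by (simp add: word_act_def)
next
  case (Cons c cs)
  then obtain \<gamma>1 where "box_op c \<gamma> = Some \<gamma>1" "word_act (rev cs) \<gamma>1 = Some \<gamma>'"
    by (cases "box_op c \<gamma>") (auto simp: word_act_snoc)
  then show ?case using box_op_composition[OF Cons.prems(1)] Cons.IH by fastforce
qed

lemma word_act_iff_bumps:
  assumes "is_composition \<alpha>" "is_composition \<beta>" "length \<alpha> \<le> length \<beta>" "\<forall>c\<in>set w. 1 \<le> c"
  shows "word_act w \<alpha> = Some \<beta> \<longleftrightarrow> bumps (rev w) (pad (length \<beta> - length \<alpha>) \<alpha>) = Some \<beta>"
proof
  assume "word_act w \<alpha> = Some \<beta>"
  moreover from this have "length \<beta> = length \<alpha> + count_list (rev w) 1"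
    using word_act_rev_composition[OF assms(1), of "rev w"] by simp
  ultimately show "bumps (rev w) (pad (length \<beta> - length \<alpha>) \<alpha>) = Some \<beta>"
    using bumps_pad[OF assms(1), of "rev w"] assms(4) by (simp add: pad_def)
next
  assume "bumps (rev w) (pad (length \<beta> - length \<alpha>) \<alpha>) = Some \<beta>"
  then obtain \<gamma>' where \<gamma>': "word_act w \<alpha> = Some \<gamma>'"
    "\<beta> = pad (length \<beta> - length \<alpha> - count_list w 1) \<gamma>'"
    using bumps_pad[OF assms(1), of "rev w"] assms(4) by (auto split: option.splits if_splits)
  define m where "m = length \<beta> - length \<alpha> - count_list w 1"
  \<comment> \<open>leftover zero padding would be a zero part of \<open>\<beta>\<close>\<close>
  have "m = 0"
  proof (rule ccontr)
    assume "m \<noteq> 0"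
    moreover have "\<beta> = pad m \<gamma>'" using \<gamma>'(2) m_def by simp
    ultimately have "\<beta> ! 0 = 0" "\<beta> \<noteq> []" by (simp_all add: pad_def nth_append)
    then show False using assms(2) nth_mem[of 0 \<beta>] by (auto simp: is_composition_def)
  qed
  then show "word_act w \<alpha> = Some \<beta>" using \<gamma>' m_def by (simp add: pad_def)
qed

section \<open>An invariant of the composition order\<close>

definition aligned :: "nat list \<Rightarrow> nat list \<Rightarrow> nat list" where
  "aligned \<alpha> \<gamma> = pad (length \<gamma> - length \<alpha>) \<alpha>"

text \<open>Besides containment of the bottom-justified \<open>\<alpha>\<close> in \<open>\<gamma>\<close>, the invariant says that a box of
  \<open>\<gamma>//\<alpha>\<close> in column \<open>j \<ge> 2\<close> never lies below a row of length \<open>j - 1\<close> that belongs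
  entirely to \<open>\<alpha>\<close>: covers preserve this because a box in column \<open>j\<close> is always added to the
  topmost row of length \<open>j - 1\<close>.\<close>

definition shape_inv :: "nat list \<Rightarrow> nat list \<Rightarrow> bool" where
  "shape_inv \<alpha> \<gamma> \<longleftrightarrow> is_composition \<gamma> \<and> length \<alpha> \<le> length \<gamma> \<and>
     (\<forall>i<length \<gamma>. aligned \<alpha> \<gamma> ! i \<le> \<gamma> ! i) \<and>
     (\<forall>r j x. r < length \<gamma> \<and> aligned \<alpha> \<gamma> ! r < j \<and> j \<le> \<gamma> ! r \<and> 2 \<le> j \<and> x < r \<longrightarrow>
        \<not> (aligned \<alpha> \<gamma> ! x = j - 1 \<and> \<gamma> ! x = j - 1))"

lemma shape_inv_refl: "is_composition \<alpha> \<Longrightarrow> shape_inv \<alpha> \<alpha>"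
  by (auto simp: shape_inv_def aligned_def pad_def)

lemma shape_inv_Cons_one:
  assumes "shape_inv \<alpha> \<gamma>"
  shows "shape_inv \<alpha> (1 # \<gamma>)"
proof -
  have P: "aligned \<alpha> (1 # \<gamma>) = 0 # aligned \<alpha> \<gamma>"
    using assms by (simp add: shape_inv_def aligned_def pad_def Suc_diff_le)
  have "\<not> (aligned \<alpha> (1 # \<gamma>) ! x = j - 1 \<and> (1 # \<gamma>) ! x = j - 1)"
    if "r < Suc (length \<gamma>)" "aligned \<alpha> (1 # \<gamma>) ! r < j" "j \<le> (1 # \<gamma>) ! r" "2 \<le> j" "x < r"
    for r j x
    using that assms P unfolding shape_inv_def
    by (cases r; cases x) auto
  moreover have "aligned \<alpha> (1 # \<gamma>) ! i \<le> (1 # \<gamma>) ! i" if "i < Suc (length \<gamma>)" for i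
    using that assms P by (cases i) (auto simp: shape_inv_def)
  ultimately show ?thesis using assms by (auto simp: shape_inv_def is_composition_def)
qed

lemma shape_inv_extend_row:
  assumes inv: "shape_inv \<alpha> \<gamma>" and k: "k < length \<gamma>" "\<forall>i < k. \<gamma> ! i \<noteq> \<gamma> ! k"
    and \<delta>: "\<delta> = \<gamma>[k := \<gamma> ! k + 1]"
  shows "shape_inv \<alpha> \<delta>"
proof -
  let ?P = "aligned \<alpha> \<gamma>"
  have P: "aligned \<alpha> \<delta> = ?P" using \<delta> by (simp add: aligned_def)
  have ge: "\<forall>i<length \<gamma>. \<gamma> ! i \<le> \<delta> ! i" using \<delta> k(1) by (auto simp: nth_list_update)
  have blocked: "\<not> (?P ! x = j - 1 \<and> \<delta> ! x = j - 1)"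
    if h: "r < length \<delta>" "?P ! r < j" "j \<le> \<delta> ! r" "2 \<le> j" "x < r" for r j x
  proof
    assume x: "?P ! x = j - 1 \<and> \<delta> ! x = j - 1"
    have "x < length \<gamma>" using h \<delta> by auto
    then have \<gamma>x: "\<gamma> ! x = j - 1"
      using inv ge x unfolding shape_inv_def by (metis le_antisym)
    show False
    proof (cases "r = k \<and> j = \<gamma> ! k + 1")
      case True
      then show False using k \<gamma>x h by auto
    next
      case False
      then have "j \<le> \<gamma> ! r" using h \<delta> by (cases "r = k") auto
      then show False using inv h \<gamma>x x \<delta> unfolding shape_inv_def by auto
    qed
  qed
  have "is_composition \<delta>" using inv \<delta>
    by (auto simp: shape_inv_def is_composition_def dest!: set_update_subset_insert[THEN subsetD])
  moreover have "\<forall>i<length \<delta>. aligned \<alpha> \<delta> ! i \<le> \<delta> ! i"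
    using inv ge P \<delta> unfolding shape_inv_def by fastforce
  moreover have "length \<alpha> \<le> length \<delta>" using inv \<delta> by (simp add: shape_inv_def)
  ultimately show ?thesis unfolding shape_inv_def P using blocked by blast
qed

lemma shape_inv_cover:
  assumes "shape_inv \<alpha> \<gamma>" "comp_cover \<gamma> \<delta>"
  shows "shape_inv \<alpha> \<delta> \<and> sum_list \<delta> = Suc (sum_list \<gamma>)"
  using assms shape_inv_Cons_one shape_inv_extend_row
  by (auto simp: comp_cover_def sum_list_update)

lemma comp_less_shape_inv:
  assumes "is_composition \<alpha>" "comp_less \<alpha> \<beta>"
  shows "shape_inv \<alpha> \<beta> \<and> sum_list \<alpha> < sum_list \<beta>"
  using assms(2) unfolding comp_less_def
proof (induction rule: tranclp_induct)
  case (base \<gamma>)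
  then show ?case using shape_inv_cover[OF shape_inv_refl[OF assms(1)]] by auto
next
  case (step \<gamma> \<delta>)
  then show ?case using shape_inv_cover by fastforce
qed

section \<open>Skew shapes with rows counted from zero\<close>

definition skew_cells :: "nat list \<Rightarrow> nat list \<Rightarrow> (nat \<times> nat) set" where
  "skew_cells \<alpha> \<beta> = {(i, j). i < length \<beta> \<and> aligned \<alpha> \<beta> ! i < j \<and> j \<le> \<beta> ! i}"

lemma finite_skew_cells: "finite (skew_cells \<alpha> \<beta>)"
proof (rule finite_subset)
  show "skew_cells \<alpha> \<beta> \<subseteq> {..<length \<beta>} \<times> {..sum_list \<beta>}"
    using elem_le_sum_list by (fastforce simp: skew_cells_def)
qed simp

lemma mem_apfst_Suc_image: "(i, j) \<in> apfst Suc ` T \<longleftrightarrow> i \<noteq> 0 \<and> (i - 1, j) \<in> T"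
  by (cases i) (auto simp: image_iff apfst_def map_prod_def split: prod.splits)

lemma skew_eq_skew_cells:
  assumes "length \<alpha> \<le> length \<beta>"
  shows "skew \<beta> \<alpha> = apfst Suc ` skew_cells \<alpha> \<beta>"
proof (rule set_eqI)
  define m where "m = length \<beta> - length \<alpha>"
  have removed: "(\<exists>i j'. (r, j) = (m + i, j') \<and> 1 \<le> i \<and> i \<le> length \<alpha> \<and> 1 \<le> j' \<and> j' \<le> \<alpha> ! (i - 1))
      \<longleftrightarrow> m < r \<and> r \<le> length \<beta> \<and> 1 \<le> j \<and> j \<le> \<alpha> ! (r - 1 - m)" for r j
    using assms by (auto simp: m_def intro!: exI[of _ "r - m"])
  have cell: "aligned \<alpha> \<beta> ! i < j \<longleftrightarrow> 1 \<le> j \<and> \<not> (m \<le> i \<and> j \<le> \<alpha> ! (i - m))"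
    if "i < length \<beta>" for i j
    using that by (auto simp: aligned_def pad_def nth_append m_def)
  fix p :: "nat \<times> nat"
  obtain r j where p: "p = (r, j)" by fastforce
  show "p \<in> skew \<beta> \<alpha> \<longleftrightarrow> p \<in> apfst Suc ` skew_cells \<alpha> \<beta>"
    unfolding p skew_def m_def[symmetric] using removed[of r j] cell[of "r - 1" j]
    by (cases r) (auto simp: diagram_def mem_apfst_Suc_image skew_cells_def)
qed

lemma supp_apfst_Suc: "supp (apfst Suc ` T) = supp T"
  by (simp add: supp_def image_image)

lemma E_set_apfst_Suc: "E_set (apfst Suc ` T) = E_set T"
  by (force simp: E_set_def mem_apfst_Suc_image)

lemma NE_set_apfst_Suc: "NE_set (apfst Suc ` T) = NE_set T"
proof -
  have "(\<forall>i1 i2. (i1, Suc j) \<in> apfst Suc ` T \<and> (i2, j) \<in> apfst Suc ` T \<longrightarrow> i1 < i2) \<longleftrightarrow>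
        (\<forall>i1 i2. (i1, Suc j) \<in> T \<and> (i2, j) \<in> T \<longrightarrow> i1 < i2)" (is "?L \<longleftrightarrow> ?R") for j
  proof
    assume L: ?L
    show ?R
    proof (intro allI impI)
      fix i1 i2 assume "(i1, Suc j) \<in> T \<and> (i2, j) \<in> T"
      then have "(Suc i1, Suc j) \<in> apfst Suc ` T \<and> (Suc i2, j) \<in> apfst Suc ` T"
        by (simp add: mem_apfst_Suc_image)
      with L show "i1 < i2" by blast
    qed
  next
    assume R: ?R
    show ?L
    proof (intro allI impI)
      fix i1 i2 assume "(i1, Suc j) \<in> apfst Suc ` T \<and> (i2, j) \<in> apfst Suc ` T"
      then have "i1 \<noteq> 0" "i2 \<noteq> 0" "(i1 - 1, Suc j) \<in> T" "(i2 - 1, j) \<in> T"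
        by (simp_all add: mem_apfst_Suc_image)
      with R have "i1 - 1 < i2 - 1" by blast
      then show "i1 < i2" by simp
    qed
  qed
  moreover have "(\<exists>i. (i, Suc j) \<in> apfst Suc ` T) \<longleftrightarrow> (\<exists>i. (i, Suc j) \<in> T)" for j
    by (force simp: mem_apfst_Suc_image)
  ultimately show ?thesis by (simp add: NE_set_def supp_apfst_Suc)
qed

section \<open>Non-commutative border strips\<close>

locale nc_strip =
  fixes \<alpha> \<beta> :: "nat list"
  assumes composition: "is_composition \<alpha>"
    and inv: "shape_inv \<alpha> \<beta>"
    and neq: "\<alpha> \<noteq> \<beta>"
    and strip: "nc_border_strip (skew \<beta> \<alpha>)"
begin

abbreviation "S \<equiv> skew_cells \<alpha> \<beta>"
abbreviation "P \<equiv> aligned \<alpha> \<beta>"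
abbreviation "E \<equiv> E_set S"
abbreviation "NE \<equiv> NE_set S"

lemma composition_\<beta>: "is_composition \<beta>"
  using inv by (simp add: shape_inv_def)

lemma length_le: "length \<alpha> \<le> length \<beta>"
  using inv by (simp add: shape_inv_def)

lemma length_aligned: "length P = length \<beta>"
  using length_le by (simp add: aligned_def pad_def)

lemma aligned_le: "i < length \<beta> \<Longrightarrow> P ! i \<le> \<beta> ! i"
  using inv by (simp add: shape_inv_def)

lemma not_blocked:
  "r < length \<beta> \<Longrightarrow> P ! r < j \<Longrightarrow> j \<le> \<beta> ! r \<Longrightarrow> 2 \<le> j \<Longrightarrow> x < r \<Longrightarrow>
    \<not> (P ! x = j - 1 \<and> \<beta> ! x = j - 1)"
  using inv unfolding shape_inv_def by blast

lemma one_le_nth_\<beta>: "i < length \<beta> \<Longrightarrow> 1 \<le> \<beta> ! i"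
  using composition_\<beta> nth_mem[of i \<beta>] by (auto simp: is_composition_def Suc_le_eq)

lemma aligned_eq_0_iff: "i < length \<beta> \<Longrightarrow> P ! i = 0 \<longleftrightarrow> i < length \<beta> - length \<alpha>"
  using composition length_le nth_mem[of "i - (length \<beta> - length \<alpha>)" \<alpha>]
  by (auto simp: aligned_def pad_def nth_append is_composition_def)

lemma skew_eq: "skew \<beta> \<alpha> = apfst Suc ` S"
  using skew_eq_skew_cells[OF length_le] .

lemma S_nonempty: "S \<noteq> {}"
proof
  assume "S = {}"
  have "\<beta> ! i \<le> P ! i" if "i < length \<beta>" for i
  proof -
    have "(i, \<beta> ! i) \<notin> S" using \<open>S = {}\<close> by simp
    then show ?thesis using that by (auto simp: skew_cells_def)
  qed
  then have "P = \<beta>"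
    using aligned_le length_aligned by (intro nth_equalityI) (auto intro: le_antisym)
  moreover have "length \<beta> - length \<alpha> = 0"
  proof (rule ccontr)
    assume "length \<beta> - length \<alpha> \<noteq> 0"
    then have "P ! 0 = 0" "\<beta> \<noteq> []" by (auto simp: aligned_def pad_def nth_append)
    with \<open>P = \<beta>\<close> show False using one_le_nth_\<beta>[of 0] by simp
  qed
  ultimately show False using neq by (simp add: aligned_def pad_def)
qed

definition a :: nat where "a = Min (snd ` S)"
definition b :: nat where "b = Max (snd ` S)"

lemma supp_S: "snd ` S = {a..b}"
proof -
  obtain x y where xy: "supp (skew \<beta> \<alpha>) = {x..y}"
    using strip by (auto simp: nc_border_strip_def interval_shape_def)
  then have "snd ` S = {x..y}" unfolding skew_eq supp_apfst_Suc by (simp add: supp_def)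
  moreover from this have "x \<le> y" using S_nonempty by auto
  moreover from \<open>x \<le> y\<close> have "Min {x..y} = x" "Max {x..y} = y"
    by (auto intro!: Min_eqI Max_eqI)
  ultimately show ?thesis by (simp add: a_def b_def)
qed

lemma a_le_b: "a \<le> b"
  using supp_S S_nonempty by (metis atLeastatMost_empty_iff2 image_is_empty)

lemma finite_rows: "finite {i. (i, j) \<in> skew \<beta> \<alpha>}"
  using finite_imageI[OF finite_imageI[OF finite_skew_cells], of fst "apfst Suc" \<alpha> \<beta>]
  by (rule finite_subset[rotated]) (force simp: skew_eq)

lemma col1_bottom: "(i, 1) \<in> S \<Longrightarrow> (i, 2) \<in> S \<Longrightarrow> (i', 1) \<in> S \<Longrightarrow> i' \<le> i"
proof -
  assume "(i, 1) \<in> S" "(i, 2) \<in> S" "(i', 1) \<in> S"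
  then have "(Suc i, 1) \<in> skew \<beta> \<alpha>" "(Suc i, 2) \<in> skew \<beta> \<alpha>" "Suc i' \<in> {i. (i, 1) \<in> skew \<beta> \<alpha>}"
    by (simp_all add: skew_eq mem_apfst_Suc_image)
  then show "i' \<le> i"
    using strip finite_rows[of 1] Max_ge unfolding nc_border_strip_def by fastforce
qed

lemma col_top:
  "2 \<le> j \<Longrightarrow> (i, j) \<in> S \<Longrightarrow> (i, Suc j) \<in> S \<Longrightarrow> (i', j) \<in> S \<Longrightarrow> i \<le> i'"
proof -
  assume "2 \<le> j" "(i, j) \<in> S" "(i, Suc j) \<in> S" "(i', j) \<in> S"
  then have "(Suc i, j) \<in> skew \<beta> \<alpha>" "(Suc i, j + 1) \<in> skew \<beta> \<alpha>" "Suc i' \<in> {i. (i, j) \<in> skew \<beta> \<alpha>}"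
    by (simp_all add: skew_eq mem_apfst_Suc_image)
  then show "i \<le> i'"
    using strip \<open>2 \<le> j\<close> finite_rows[of j] Min_le unfolding nc_border_strip_def by fastforce
qed

definition col :: "nat \<Rightarrow> nat set" where
  "col j = {i. i < length \<beta> \<and> P ! i < j \<and> j \<le> \<beta> ! i}"

text \<open>The only row of column \<open>j\<close> that can continue to column \<open>j + 1\<close> inside an nc border strip,
  by conditions (1) and (2).\<close>

definition pivot :: "nat \<Rightarrow> nat" where
  "pivot j = (if j = 1 then Max (col 1) else Min (col j))"

definition admissible :: "nat set \<Rightarrow> bool" where
  "admissible D \<longleftrightarrow> E \<subseteq> D \<and> D \<subseteq> E \<union> NE"

lemma mem_S_iff: "(i, j) \<in> S \<longleftrightarrow> i \<in> col j"
  by (simp add: skew_cells_def col_def)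

lemma finite_col: "finite (col j)"
  by (simp add: col_def)

lemma col_nonempty_iff: "col j \<noteq> {} \<longleftrightarrow> a \<le> j \<and> j \<le> b"
proof -
  have "col j \<noteq> {} \<longleftrightarrow> j \<in> snd ` S" using mem_S_iff by force
  then show ?thesis using supp_S by simp
qed

lemma one_le_a: "1 \<le> a"
  using col_nonempty_iff[of a] a_le_b by (auto simp: col_def)

lemma pivot_in_col: "a \<le> j \<Longrightarrow> j \<le> b \<Longrightarrow> pivot j \<in> col j"
  using col_nonempty_iff[of j] Max_in[OF finite_col] Min_in[OF finite_col] by (auto simp: pivot_def)

lemma pivot_eq:
  assumes "(i, j) \<in> S" "(i, Suc j) \<in> S"
  shows "pivot j = i"
proof (cases "j = 1")
  case True
  with assms have "(i, 1) \<in> S" "(i, 2) \<in> S" by (auto simp: numeral_2_eq_2)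
  then show ?thesis
    using True col1_bottom finite_col by (auto simp: pivot_def mem_S_iff intro!: Max_eqI)
next
  case False
  have "j \<noteq> 0" using assms by (auto simp: skew_cells_def)
  with False have "2 \<le> j" by simp
  then show ?thesis
    using False assms col_top finite_col by (auto simp: pivot_def mem_S_iff intro!: Min_eqI)
qed

lemma mem_E_iff: "j \<in> E \<longleftrightarrow> (\<exists>i. (i, j) \<in> S \<and> (i, Suc j) \<in> S)"
  by (simp add: E_set_def)

lemma E_subset: "E \<subseteq> {a..<b}"
proof
  fix j assume "j \<in> E"
  then obtain i where "i \<in> col j" "i \<in> col (Suc j)" by (auto simp: mem_E_iff mem_S_iff)
  then show "j \<in> {a..<b}" using col_nonempty_iff[of j] col_nonempty_iff[of "Suc j"] by auto
qed

lemma NE_subset: "NE \<subseteq> {a..<b}"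
proof
  fix j assume "j \<in> NE"
  then have "j \<in> snd ` S" "Suc j \<in> snd ` S" by (force simp: NE_set_def supp_def)+
  then show "j \<in> {a..<b}" using supp_S by auto
qed

lemma E_NE_disjoint: "E \<inter> NE = {}"
  by (auto simp: E_set_def NE_set_def)

lemma NE_above:
  "j \<in> NE \<Longrightarrow> (i1, Suc j) \<in> S \<Longrightarrow> (i2, j) \<in> S \<Longrightarrow> i1 < i2"
  by (auto simp: NE_set_def)

end

section \<open>The ascending letters\<close>

lemma set_take_strict_sorted:
  fixes ds :: "'a :: linorder list"
  assumes "sorted_wrt (<) ds" "k < length ds"
  shows "set (take k ds) = {d \<in> set ds. d < ds ! k}"
proof -
  have "ds ! i < ds ! k \<longleftrightarrow> i < k" if "i < length ds" for i
    using assms that sorted_wrt_nth_less[OF assms(1)]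
    by (metis linorder_neqE_nat not_less_iff_gr_or_eq)
  then have "{d \<in> set ds. d < ds ! k} = (!) ds ` {0..<k}"
    using assms(2) by (auto simp: in_set_conv_nth) (metis less_trans)
  then show ?thesis using assms(2) by (simp add: nth_image)
qed

lemma bump_eq_update:
  assumes "r < length s" "s ! r = j - 1" "1 \<le> j"
    and "j = 1 \<Longrightarrow> \<forall>i<length s. s ! i = 0 \<longrightarrow> i \<le> r"
    and "j \<noteq> 1 \<Longrightarrow> \<forall>i<r. s ! i \<noteq> j - 1"
  shows "bump j s = Some (s[r := j])"
proof -
  obtain t where t: "bump j s = Some t" using bump_exists assms(1-3) by blast
  from bump_SomeD[OF t] obtain r' where r': "r' < length s" "s ! r' = j - 1" "t = s[r' := j]"
    "j = 1 \<Longrightarrow> \<forall>i<length s. s ! i = 0 \<longrightarrow> i \<le> r'"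
    "j \<noteq> 1 \<Longrightarrow> \<forall>i<length s. s ! i = j - 1 \<longrightarrow> r' \<le> i"
    by blast
  have "r' = r"
  proof (cases "j = 1")
    case True
    then show ?thesis using assms(1,2,4) r'(1,2,4) by (simp add: le_antisym)
  next
    case False
    then have "r' \<le> r" "\<not> r' < r" using assms(1,2,5) r'(2,5) by auto
    then show ?thesis by simp
  qed
  then show ?thesis using t r' by simp
qed

context nc_strip
begin

text \<open>The shape reached from \<open>\<alpha>\<close> after the ascending letters \<open>Q\<close>: each \<open>d \<in> Q\<close> adds the box
  \<open>(pivot d, d)\<close>.\<close>

definition raise :: "nat set \<Rightarrow> nat list" where
  "raise Q = map (\<lambda>i. P ! i + card {d \<in> Q. pivot d = i}) [0..<length \<beta>]"

lemma nth_raise: "i < length \<beta> \<Longrightarrow> raise Q ! i = P ! i + card {d \<in> Q. pivot d = i}"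
  by (simp add: raise_def)

lemma length_raise [simp]: "length (raise Q) = length \<beta>"
  by (simp add: raise_def)

lemma raise_empty: "raise {} = P"
  by (rule nth_equalityI) (auto simp: length_aligned nth_raise)

lemma pivot_fibre_subset:
  "Q \<subseteq> {a..<b} \<Longrightarrow> {d \<in> Q. pivot d = i} \<subseteq> {P ! i<..\<beta> ! i}"
  using pivot_in_col by (force simp: col_def)

lemma aligned_le_raise: "i < length \<beta> \<Longrightarrow> P ! i \<le> raise Q ! i"
  by (simp add: nth_raise)

lemma admissible_interior:
  assumes "admissible D" "i < length \<beta>" "P ! i < d" "Suc d \<le> \<beta> ! i"
  shows "d \<in> D \<and> pivot d = i"
proof -
  have "(i, d) \<in> S" "(i, Suc d) \<in> S" using assms by (auto simp: skew_cells_def)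
  then show ?thesis using pivot_eq mem_E_iff assms(1) by (auto simp: admissible_def)
qed

text \<open>A row \<open>x\<close> of length \<open>j - 1\<close> above a cell \<open>(y, j)\<close> can neither belong to \<open>\<alpha>\<close> (by the
  shape invariant) nor have received its last box from an ascent \<open>j - 1\<close>: that box would give a
  horizontal edge (not in an nc border strip) or violate \<open>j - 1 \<in> NE\<close>.\<close>

lemma no_blocking_row:
  assumes D: "admissible D" "D \<subseteq> {a..<b}" and "x < y" "(y, j) \<in> S" "2 \<le> j" "x < length \<beta>"
    "\<beta> ! x = j - 1" and last: "P ! x = j - 1 \<or> (j - 1 \<in> D \<and> pivot (j - 1) = x)"
  shows False
proof -
  have y: "y < length \<beta>" "P ! y < j" "j \<le> \<beta> ! y" using assms(4) by (auto simp: skew_cells_def)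
  from last show False
  proof
    assume "P ! x = j - 1"
    then show False using not_blocked[OF y] assms by auto
  next
    assume h: "j - 1 \<in> D \<and> pivot (j - 1) = x"
    with D have "j - 1 \<in> E \<or> j - 1 \<in> NE" by (auto simp: admissible_def)
    then show False
    proof
      assume "j - 1 \<in> E"
      then obtain i where i: "(i, j - 1) \<in> S" "(i, Suc (j - 1)) \<in> S" using mem_E_iff by blast
      then have "i = x" using pivot_eq h by blast
      then show False using i assms by (auto simp: skew_cells_def)
    next
      assume "j - 1 \<in> NE"
      moreover have "(x, j - 1) \<in> S" using h D pivot_in_col mem_S_iff by auto
      moreover have "(y, Suc (j - 1)) \<in> S" using assms by simp
      ultimately show False using NE_above \<open>x < y\<close> by fastforce
    qed
  qed
qed

context
  fixes D Q :: "nat set" and j :: nat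
  assumes D: "admissible D" "D \<subseteq> {a..<b}" and j: "j \<in> D" and Q: "Q = {d \<in> D. d < j}"
begin

lemma Q_subset: "Q \<subseteq> {a..<b}"
  using D(2) Q by auto

lemma finite_Q: "finite Q"
  using Q_subset finite_subset by blast

lemma pivot_cell: "pivot j < length \<beta>" "P ! pivot j < j" "j \<le> \<beta> ! pivot j"
  using pivot_in_col[of j] D(2) j by (auto simp: col_def)

lemma pivot_fibre_raise: "{d \<in> Q. pivot d = pivot j} = {P ! pivot j<..<j}"
proof
  show "{d \<in> Q. pivot d = pivot j} \<subseteq> {P ! pivot j<..<j}"
    using pivot_fibre_subset[OF Q_subset, of "pivot j"] Q by auto
  show "{P ! pivot j<..<j} \<subseteq> {d \<in> Q. pivot d = pivot j}"
  proof
    fix d assume d: "d \<in> {P ! pivot j<..<j}"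
    then have "d \<in> D \<and> pivot d = pivot j"
      using admissible_interior[OF D(1) pivot_cell(1), of d] pivot_cell(3) by simp
    with d Q show "d \<in> {d \<in> Q. pivot d = pivot j}" by simp
  qed
qed

lemma raise_at_pivot: "raise Q ! pivot j = j - 1"
  using pivot_cell by (simp add: nth_raise pivot_fibre_raise)

lemma raise_above_pivot:
  assumes "2 \<le> j" "x < pivot j" and raise: "raise Q ! x = j - 1"
  shows False
proof -
  let ?K = "{d \<in> Q. pivot d = x}"
  have jab: "a \<le> j" "j \<le> b" using D(2) j by auto
  then have xl: "x < length \<beta>" using assms(2) pivot_in_col by (force simp: col_def)
  have K: "?K \<subseteq> {P ! x<..\<beta> ! x}" "finite ?K"
    using pivot_fibre_subset[OF Q_subset, of x] finite_Q by auto
  have Kc: "P ! x + card ?K = j - 1" using raise xl by (simp add: nth_raise)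
  have "x \<notin> col j"
  proof
    assume "x \<in> col j"
    then have "pivot j \<le> x" using assms(1) finite_col by (simp add: pivot_def)
    with assms(2) show False by simp
  qed
  then have "\<beta> ! x < j" using Kc xl assms(1) by (auto simp: col_def)
  moreover have "card ?K \<le> \<beta> ! x - P ! x" using card_mono[OF _ K(1)] by simp
  ultimately have \<beta>x: "\<beta> ! x = j - 1" using Kc aligned_le[OF xl] by arith
  have "P ! x = j - 1 \<or> (j - 1 \<in> D \<and> pivot (j - 1) = x)"
  proof (cases "P ! x = j - 1")
    case False
    have "j - 1 \<in> ?K"
    proof (rule ccontr)
      assume "j - 1 \<notin> ?K"
      then have "?K \<subseteq> {P ! x<..<j - 1}" using K(1) \<beta>x by fastforce
      then have "card ?K \<le> j - 1 - Suc (P ! x)" using card_mono[of "{P ! x<..<j - 1}"] by simp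
      then show False using Kc False by linarith
    qed
    then show ?thesis using Q by auto
  qed simp
  moreover have "(pivot j, j) \<in> S" using pivot_in_col jab mem_S_iff by blast
  ultimately show False using no_blocking_row[OF D assms(2) _ assms(1) xl \<beta>x] by blast
qed

lemma raise_zero_below_pivot:
  assumes "j = 1" "x < length \<beta>" "raise Q ! x = 0"
  shows "x \<le> pivot j"
proof -
  have "Q = {}" using Q D(2) one_le_a assms(1) by auto
  then have "x \<in> col 1" using assms one_le_nth_\<beta> raise_empty by (auto simp: col_def)
  then show ?thesis using assms(1) finite_col by (simp add: pivot_def)
qed

lemma bump_raise: "bump j (raise Q) = Some (raise (insert j Q))"
proof -
  have "1 \<le> j" using one_le_a D(2) j by auto
  have "bump j (raise Q) = Some ((raise Q)[pivot j := j])"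
  proof (rule bump_eq_update)
    show "pivot j < length (raise Q)" using pivot_cell by simp
    show "\<forall>i<length (raise Q). raise Q ! i = 0 \<longrightarrow> i \<le> pivot j" if "j = 1"
      using raise_zero_below_pivot[OF that] by simp
    show "\<forall>i<pivot j. raise Q ! i \<noteq> j - 1" if "j \<noteq> 1"
      using raise_above_pivot that \<open>1 \<le> j\<close> by fastforce
  qed (use raise_at_pivot \<open>1 \<le> j\<close> in simp_all)
  also have "(raise Q)[pivot j := j] = raise (insert j Q)"
  proof (rule nth_equalityI)
    fix i assume "i < length ((raise Q)[pivot j := j])"
    then have i: "i < length \<beta>" by simp
    have "{d \<in> insert j Q. pivot d = i}
        = (if i = pivot j then insert j {d \<in> Q. pivot d = i} else {d \<in> Q. pivot d = i})"
      by auto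
    moreover have "j \<notin> Q" using Q by simp
    ultimately have "card {d \<in> insert j Q. pivot d = i}
        = card {d \<in> Q. pivot d = i} + (if i = pivot j then 1 else 0)"
      using finite_Q by simp
    then show "(raise Q)[pivot j := j] ! i = raise (insert j Q) ! i"
      using raise_at_pivot i \<open>1 \<le> j\<close> by (auto simp: nth_raise)
  qed simp
  finally show ?thesis .
qed

end

lemma bumps_ascending:
  assumes D: "admissible D" "D \<subseteq> {a..<b}"
  shows "bumps (sorted_list_of_set D) P = Some (raise D)"
proof -
  have fin: "finite D" using D(2) finite_subset by blast
  define ds where "ds = sorted_list_of_set D"
  have ds: "sorted_wrt (<) ds" "set ds = D" using fin unfolding ds_def by simp_all
  have "bumps (take k ds) P = Some (raise (set (take k ds)))" if "k \<le> length ds" for k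
    using that
  proof (induction k)
    case 0
    then show ?case by (simp add: raise_empty)
  next
    case (Suc k)
    then have k: "k < length ds" by simp
    have "set (take k ds) = {d \<in> D. d < ds ! k}"
      using set_take_strict_sorted[OF ds(1) k] ds(2) by simp
    from bump_raise[OF D _ this] have "bump (ds ! k) (raise (set (take k ds)))
        = Some (raise (insert (ds ! k) (set (take k ds))))"
      using k ds(2) nth_mem by blast
    then show ?case using Suc k by (simp add: take_Suc_conv_app_nth bumps_append)
  qed
  from this[of "length ds"] show ?thesis using ds(2) by (simp add: ds_def)
qed

end

section \<open>The descending letters\<close>

context nc_strip
begin

lemma card_col_continuing: "card {i \<in> col j. j < \<beta> ! i} = (if j \<in> E then 1 else 0)"
proof -
  have cell: "i \<in> col j \<and> j < \<beta> ! i \<longleftrightarrow> (i, j) \<in> S \<and> (i, Suc j) \<in> S" for i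
    by (auto simp: col_def skew_cells_def)
  show ?thesis
  proof (cases "j \<in> E")
    case True
    then obtain i where "(i, j) \<in> S" "(i, Suc j) \<in> S" using mem_E_iff by blast
    then have "{i \<in> col j. j < \<beta> ! i} = {pivot j}" using cell pivot_eq by blast
    then show ?thesis using True by simp
  next
    case False
    then have "{i \<in> col j. j < \<beta> ! i} = {}" using cell mem_E_iff by blast
    then show ?thesis using False by (metis card.empty)
  qed
qed

context
  fixes D :: "nat set"
  assumes D: "admissible D" "D \<subseteq> {a..<b}"
begin

lemma finite_D: "finite D"
  using D(2) finite_subset by blast

lemma finite_pivot_fibre: "finite {d \<in> D. pivot d = i}"
  using finite_D by simp

lemma interior_subset_pivot_fibre:
  "i < length \<beta> \<Longrightarrow> {P ! i<..<\<beta> ! i} \<subseteq> {d \<in> D. pivot d = i}"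
  using admissible_interior[OF D(1)] by (auto simp: Suc_le_eq)

lemma raise_bounds: "i < length \<beta> \<Longrightarrow> raise D ! i \<le> \<beta> ! i \<and> \<beta> ! i \<le> Suc (raise D ! i)"
proof -
  assume i: "i < length \<beta>"
  let ?K = "{d \<in> D. pivot d = i}"
  have "card {P ! i<..<\<beta> ! i} \<le> card ?K"
    using card_mono[OF finite_pivot_fibre interior_subset_pivot_fibre[OF i]] .
  moreover have "card ?K \<le> card {P ! i<..\<beta> ! i}"
    using card_mono[OF _ pivot_fibre_subset[OF D(2)]] by simp
  ultimately show ?thesis using aligned_le[OF i] nth_raise[OF i, of D] by simp arith
qed

lemma full_row_ends_with_ascent:
  assumes i: "i < length \<beta>" and full: "raise D ! i = \<beta> ! i" and "P ! i < \<beta> ! i"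
  shows "\<beta> ! i \<in> D \<and> pivot (\<beta> ! i) = i"
proof (rule ccontr)
  assume last: "\<not> (\<beta> ! i \<in> D \<and> pivot (\<beta> ! i) = i)"
  have "{d \<in> D. pivot d = i} \<subseteq> {P ! i<..<\<beta> ! i}"
  proof
    fix d assume d: "d \<in> {d \<in> D. pivot d = i}"
    then have "d \<in> {P ! i<..\<beta> ! i}" using pivot_fibre_subset[OF D(2), of i] by blast
    moreover have "d \<noteq> \<beta> ! i" using d last by auto
    ultimately show "d \<in> {P ! i<..<\<beta> ! i}" by auto
  qed
  then have "card {d \<in> D. pivot d = i} \<le> \<beta> ! i - Suc (P ! i)"
    using card_mono[of "{P ! i<..<\<beta> ! i}"] by simp
  then show False using full assms(3) i by (simp add: nth_raise)
qed

lemma ascent_outside_E_ends_row: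
  assumes "j \<in> D" "j \<notin> E"
  shows "pivot j \<in> col j \<and> \<beta> ! pivot j = j \<and> raise D ! pivot j = j"
proof -
  let ?i = "pivot j"
  have col: "?i \<in> col j" using pivot_in_col assms(1) D(2) by auto
  then have i: "?i < length \<beta>" "P ! ?i < j" "j \<le> \<beta> ! ?i" by (auto simp: col_def)
  have \<beta>i: "\<beta> ! ?i = j"
  proof (rule ccontr)
    assume "\<beta> ! ?i \<noteq> j"
    then have "(?i, j) \<in> S" "(?i, Suc j) \<in> S" using i by (auto simp: skew_cells_def)
    then show False using assms(2) mem_E_iff by blast
  qed
  have "{P ! ?i<..\<beta> ! ?i} \<subseteq> {d \<in> D. pivot d = ?i}"
  proof
    fix d assume d: "d \<in> {P ! ?i<..\<beta> ! ?i}"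
    show "d \<in> {d \<in> D. pivot d = ?i}"
    proof (cases "d = \<beta> ! ?i")
      case True
      then show ?thesis using assms(1) \<beta>i by simp
    next
      case False
      with d have "d \<in> {P ! ?i<..<\<beta> ! ?i}" by auto
      then show ?thesis using interior_subset_pivot_fibre[OF i(1)] by blast
    qed
  qed
  from card_mono[OF finite_pivot_fibre this]
  have "\<beta> ! ?i - P ! ?i \<le> card {d \<in> D. pivot d = ?i}" by simp
  then have "\<beta> ! ?i \<le> raise D ! ?i" using i by (simp add: nth_raise)
  then show ?thesis using raise_bounds[OF i(1)] \<beta>i col by simp
qed

lemma card_col_completed:
  "card {i \<in> col j. \<beta> ! i = j \<and> raise D ! i = j} = (if j \<in> D \<and> j \<notin> E then 1 else 0)"
proof -
  have ascent: "j \<in> D \<and> pivot j = i" if "i \<in> col j" "\<beta> ! i = j" "raise D ! i = j" for i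
    using full_row_ends_with_ascent[of i] that by (auto simp: col_def)
  show ?thesis
  proof (cases "j \<in> D \<and> j \<notin> E")
    case True
    have "{i \<in> col j. \<beta> ! i = j \<and> raise D ! i = j} = {pivot j}"
    proof
      show "{i \<in> col j. \<beta> ! i = j \<and> raise D ! i = j} \<subseteq> {pivot j}"
        using ascent by auto
      show "{pivot j} \<subseteq> {i \<in> col j. \<beta> ! i = j \<and> raise D ! i = j}"
        using ascent_outside_E_ends_row True by simp
    qed
    then show ?thesis using True by simp
  next
    case False
    have "\<not> (i \<in> col j \<and> \<beta> ! i = j \<and> raise D ! i = j)" for i
    proof
      assume i: "i \<in> col j \<and> \<beta> ! i = j \<and> raise D ! i = j"
      then have "j \<in> D" "pivot j = i" using ascent by auto
      with False have "j \<in> E" by simp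
      then obtain i' where "(i', j) \<in> S" "(i', Suc j) \<in> S" using mem_E_iff by blast
      moreover from this have "i' = i" using pivot_eq \<open>pivot j = i\<close> by blast
      ultimately show False using i by (simp add: skew_cells_def)
    qed
    then have "{i \<in> col j. \<beta> ! i = j \<and> raise D ! i = j} = {}" by blast
    then show ?thesis using False by (metis card.empty)
  qed
qed

definition missing :: "nat \<Rightarrow> nat set" where
  "missing j = {i. i < length \<beta> \<and> raise D ! i < \<beta> ! i \<and> \<beta> ! i = j}"

lemma finite_missing: "finite (missing j)"
  by (simp add: missing_def)

lemma card_missing: "card (missing j) = card (col j) - (if j \<in> D then 1 else 0)"
proof -
  let ?A1 = "{i \<in> col j. j < \<beta> ! i}" and ?A2 = "{i \<in> col j. \<beta> ! i = j \<and> raise D ! i = j}"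
  have "missing j \<subseteq> col j"
  proof
    fix i assume "i \<in> missing j"
    then show "i \<in> col j"
      using aligned_le_raise[of i D] by (auto simp: col_def missing_def)
  qed
  moreover have "col j \<subseteq> ?A1 \<union> ?A2 \<union> missing j"
  proof
    fix i assume "i \<in> col j"
    then have "i < length \<beta>" "j \<le> \<beta> ! i" by (auto simp: col_def)
    then show "i \<in> ?A1 \<union> ?A2 \<union> missing j"
      using \<open>i \<in> col j\<close> raise_bounds[of i] by (auto simp: missing_def)
  qed
  ultimately have "col j = ?A1 \<union> ?A2 \<union> missing j" by blast
  then have "card (col j) = card (?A1 \<union> ?A2 \<union> missing j)" by simp
  also have "\<dots> = card ?A1 + card ?A2 + card (missing j)"
  proof -
    have "?A1 \<inter> ?A2 = {}" "(?A1 \<union> ?A2) \<inter> missing j = {}" by (auto simp: missing_def)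
    moreover have "finite ?A1" "finite ?A2" using finite_col[of j] by simp_all
    ultimately show ?thesis using finite_missing[of j] by (simp add: card_Un_disjoint)
  qed
  finally have "card (col j) = card ?A1 + card ?A2 + card (missing j)" .
  moreover have "j \<in> E \<Longrightarrow> j \<in> D" using D(1) by (auto simp: admissible_def)
  ultimately show ?thesis
    unfolding card_col_continuing card_col_completed by (cases "j \<in> D") auto
qed

text \<open>The descending letters complete the missing rows column by column from right to left:
  \<open>fill x Q\<close> is the shape once the columns beyond \<open>x\<close> and the rows \<open>Q\<close> of column \<open>x\<close> are done.\<close>

definition fill :: "nat \<Rightarrow> nat set \<Rightarrow> nat list" where
  "fill x Q = map (\<lambda>i. if i \<in> Q \<or> (raise D ! i < \<beta> ! i \<and> x < \<beta> ! i) then \<beta> ! i else raise D ! i)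
     [0..<length \<beta>]"

lemma length_fill [simp]: "length (fill x Q) = length \<beta>"
  by (simp add: fill_def)

lemma nth_fill:
  "i < length \<beta> \<Longrightarrow>
    fill x Q ! i = (if i \<in> Q \<or> (raise D ! i < \<beta> ! i \<and> x < \<beta> ! i) then \<beta> ! i else raise D ! i)"
  by (simp add: fill_def)

lemma fill_missing: "1 \<le> j \<Longrightarrow> fill j (missing j) = fill (j - 1) {}"
  by (rule nth_equalityI) (auto simp: nth_fill missing_def)

lemma col_of_incomplete_row:
  "i < length \<beta> \<Longrightarrow> raise D ! i < \<beta> ! i \<Longrightarrow> a \<le> \<beta> ! i \<and> \<beta> ! i \<le> b"
proof -
  assume i: "i < length \<beta>" "raise D ! i < \<beta> ! i"
  then have "i \<in> col (\<beta> ! i)" using aligned_le_raise[OF i(1), of D] by (simp add: col_def)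
  then show ?thesis using col_nonempty_iff by blast
qed

lemma fill_b: "fill b {} = raise D"
proof (rule nth_equalityI)
  fix i assume "i < length (fill b {})"
  then have i: "i < length \<beta>" by simp
  then have "\<not> (raise D ! i < \<beta> ! i \<and> b < \<beta> ! i)"
    using col_of_incomplete_row by fastforce
  then show "fill b {} ! i = raise D ! i" using i by (simp add: nth_fill)
qed simp

lemma fill_before_a: "fill (a - 1) {} = \<beta>"
proof (rule nth_equalityI)
  fix i assume "i < length (fill (a - 1) {})"
  then have i: "i < length \<beta>" by simp
  show "fill (a - 1) {} ! i = \<beta> ! i"
  proof (cases "raise D ! i < \<beta> ! i")
    case True
    then have "a - 1 < \<beta> ! i" using col_of_incomplete_row[OF i] one_le_a by linarith
    then show ?thesis using True i by (simp add: nth_fill)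
  next
    case False
    then show ?thesis using raise_bounds[OF i] i by (simp add: nth_fill)
  qed
qed simp

lemma fill_pred_rows:
  assumes "Q \<subseteq> missing j" "1 \<le> j" "i < length \<beta>" "fill j Q ! i = j - 1"
  shows "i \<in> missing j - Q \<or> (raise D ! i = j - 1 \<and> \<beta> ! i = j - 1)"
proof (cases "i \<in> Q")
  case True
  then have "\<beta> ! i = j" using assms(1) by (auto simp: missing_def)
  then show ?thesis using assms True by (simp add: nth_fill)
next
  case False
  have bounds: "raise D ! i \<le> \<beta> ! i \<and> \<beta> ! i \<le> Suc (raise D ! i)" using raise_bounds[OF assms(3)] .
  show ?thesis
  proof (cases "raise D ! i < \<beta> ! i \<and> j < \<beta> ! i")
    case True
    then have "fill j Q ! i = \<beta> ! i" using assms(3) by (simp add: nth_fill)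
    then show ?thesis using True assms(4) by linarith
  next
    case incomplete: False
    then have "fill j Q ! i = raise D ! i" using False assms(3) by (simp add: nth_fill)
    then have "raise D ! i = j - 1" using assms(4) by simp
    then show ?thesis using bounds incomplete False assms(2,3) by (auto simp: missing_def)
  qed
qed

text \<open>A complete row of length \<open>j - 1\<close> above a row missing its box in column \<open>j\<close> would block
  that box; hence the letter \<open>j\<close>, acting on the topmost row of length \<open>j - 1\<close>, completes a
  missing row.\<close>

lemma missing_row_above_complete:
  assumes y: "y \<in> missing j" and r: "r < length \<beta>" "raise D ! r = j - 1" "\<beta> ! r = j - 1"
  shows "y < r"
proof (rule ccontr)
  assume "\<not> y < r"
  moreover have "r \<noteq> y" using y r by (auto simp: missing_def)
  ultimately have "r < y" by simp
  have y\<beta>: "y < length \<beta>" "raise D ! y < \<beta> ! y" "\<beta> ! y = j" using y by (auto simp: missing_def)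
  then have "(y, j) \<in> S" using aligned_le_raise[of y D] by (auto simp: skew_cells_def)
  have "2 \<le> j" using one_le_nth_\<beta>[OF r(1)] r(3) by simp
  have "P ! r = j - 1 \<or> (j - 1 \<in> D \<and> pivot (j - 1) = r)"
  proof (cases "P ! r < \<beta> ! r")
    case True
    then show ?thesis using full_row_ends_with_ascent[OF r(1)] r(2,3) by simp
  next
    case False
    then show ?thesis using aligned_le[OF r(1)] r(2,3) by simp
  qed
  then show False using no_blocking_row[OF D \<open>r < y\<close> \<open>(y, j) \<in> S\<close> \<open>2 \<le> j\<close> r(1,3)] by blast
qed

lemma bump_fill:
  assumes j: "a \<le> j" "j \<le> b" and Q: "Q \<subseteq> missing j" "Q \<noteq> missing j"
  shows "\<exists>x \<in> missing j - Q. bump j (fill j Q) = Some (fill j (insert x Q))"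
proof -
  have "1 \<le> j" using j one_le_a by simp
  obtain y where y: "y \<in> missing j" "y \<notin> Q" using Q by blast
  then have yl: "y < length \<beta>" and y\<beta>: "raise D ! y < \<beta> ! y" "\<beta> ! y = j"
    by (auto simp: missing_def)
  have "fill j Q ! y = j - 1"
    using y yl y\<beta> raise_bounds[OF yl] by (simp add: nth_fill)
  then obtain t where "bump j (fill j Q) = Some t"
    using bump_exists[OF \<open>1 \<le> j\<close>, of y "fill j Q"] yl by auto
  with bump_SomeD obtain r where r: "r < length \<beta>" "fill j Q ! r = j - 1"
    "bump j (fill j Q) = Some ((fill j Q)[r := j])"
    "j \<noteq> 1 \<Longrightarrow> \<forall>i<length \<beta>. fill j Q ! i = j - 1 \<longrightarrow> r \<le> i"
    by fastforce
  have rN: "r \<in> missing j - Q"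
  proof (rule ccontr)
    assume "r \<notin> missing j - Q"
    then have complete: "raise D ! r = j - 1" "\<beta> ! r = j - 1"
      using fill_pred_rows[OF Q(1) \<open>1 \<le> j\<close> r(1,2)] by auto
    then have "y < r" using missing_row_above_complete[OF y(1) r(1)] by simp
    moreover have "j \<noteq> 1" using one_le_nth_\<beta>[OF r(1)] complete by simp
    ultimately show False using r(4) \<open>fill j Q ! y = j - 1\<close> yl by fastforce
  qed
  moreover have "(fill j Q)[r := j] = fill j (insert r Q)"
  proof (rule nth_equalityI)
    fix i assume "i < length ((fill j Q)[r := j])"
    then have "i < length \<beta>" by simp
    moreover have "\<beta> ! r = j" using rN by (simp add: missing_def)
    ultimately show "(fill j Q)[r := j] ! i = fill j (insert r Q) ! i"
      using r(1) by (cases "i = r") (simp_all add: nth_fill)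
  qed simp
  ultimately show ?thesis using r(3) by auto
qed

lemma bumps_column:
  assumes "a \<le> j" "j \<le> b" "Q \<subseteq> missing j"
  shows "bumps (replicate (card (missing j - Q)) j) (fill j Q) = Some (fill j (missing j))"
  using assms(3)
proof (induction "card (missing j - Q)" arbitrary: Q)
  case 0
  then have "missing j - Q = {}" using finite_missing[of j] by simp
  with \<open>Q \<subseteq> missing j\<close> have "Q = missing j" by blast
  then show ?case by simp
next
  case (Suc n)
  have card: "card (missing j - Q) = Suc n" using Suc.hyps(2) by simp
  then have "Q \<noteq> missing j" by auto
  from bump_fill[OF assms(1,2) Suc.prems this] obtain x where
    x: "x \<in> missing j - Q" "bump j (fill j Q) = Some (fill j (insert x Q))" by blast
  have "missing j - insert x Q = (missing j - Q) - {x}" by blast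
  then have "card (missing j - insert x Q) = n"
    using card x(1) finite_missing[of j] by (simp add: card_Diff_singleton)
  moreover have "insert x Q \<subseteq> missing j" using x(1) Suc.prems by blast
  ultimately have "bumps (replicate n j) (fill j (insert x Q)) = Some (fill j (missing j))"
    using Suc.hyps(1)[of "insert x Q"] by simp
  then show ?case using x(2) card by simp
qed

end

text \<open>The multiplicity of the letter \<open>j\<close> in the weakly increasing part of the hookword of \<open>D\<close>:
  every box of column \<open>j\<close> except the one added by the ascent \<open>j\<close>.\<close>

definition inc_mult :: "nat set \<Rightarrow> nat \<Rightarrow> nat" where
  "inc_mult D j = card (col j) - (if j \<in> D then 1 else 0)"

definition inc_part :: "nat set \<Rightarrow> nat list" where
  "inc_part D = concat (map (\<lambda>j. replicate (inc_mult D j) j) [a..<Suc b])"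

lemma bumps_descending:
  assumes D: "admissible D" "D \<subseteq> {a..<b}"
  shows "bumps (rev (inc_part D)) (raise D) = Some \<beta>"
proof -
  let ?w = "\<lambda>k. concat (map (\<lambda>j. replicate (inc_mult D j) j) (rev [a..<k]))"
  have "bumps (?w k) (fill D (k - 1) {}) = Some \<beta>" if "a \<le> k" "k \<le> Suc b" for k
    using that
  proof (induction k)
    case (Suc k)
    show ?case
    proof (cases "a = Suc k")
      case True
      then show ?thesis using fill_before_a[OF D] by simp
    next
      case False
      with Suc.prems have k: "a \<le> k" "k \<le> b" by auto
      have "bumps (replicate (inc_mult D k) k) (fill D k {}) = Some (fill D (k - 1) {})"
        using bumps_column[OF D k, of "{}"] card_missing[OF D] fill_missing[OF D] one_le_a k
        by (simp add: inc_mult_def)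
      then show ?thesis using Suc.IH k by (simp add: bumps_append)
    qed
  qed (use one_le_a in simp)
  from this[of "Suc b"] show ?thesis
    using a_le_b fill_b[OF D] by (simp add: inc_part_def rev_concat rev_map comp_def)
qed

lemma bumps_admissible:
  assumes "admissible D" "D \<subseteq> {a..<b}"
  shows "bumps (sorted_list_of_set D @ rev (inc_part D)) P = Some \<beta>"
  using bumps_ascending[OF assms] bumps_descending[OF assms] by (simp add: bumps_append)

end

section \<open>Only admissible descent sets work\<close>

lemma sorted_concat_replicate_upt: "sorted (concat (map (\<lambda>j. replicate (f j) j) [x..<y]))"
  by (induction y) (auto simp: sorted_append)

context nc_strip
begin

lemma sorted_inc_part: "sorted (inc_part D)"
  unfolding inc_part_def by (rule sorted_concat_replicate_upt)

lemma crossing_rows: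
  assumes "a \<le> j" "j < b" "j \<notin> E" "j \<notin> NE"
  obtains i1 i2 where "(i1, Suc j) \<in> S" "(i2, j) \<in> S" "i2 < i1" "P ! i1 = j"
proof -
  have "j \<in> supp S" using assms(1,2) supp_S by (simp add: supp_def)
  moreover have "col (Suc j) \<noteq> {}" using assms(1,2) col_nonempty_iff by simp
  then have "\<exists>i. (i, j + 1) \<in> S" by (auto simp: mem_S_iff)
  ultimately have "\<not> (\<forall>i1 i2. (i1, j + 1) \<in> S \<and> (i2, j) \<in> S \<longrightarrow> i1 < i2)"
    using assms(4) unfolding NE_set_def by blast
  then obtain i1 i2 where i: "(i1, Suc j) \<in> S" "(i2, j) \<in> S" "\<not> i1 < i2" by auto
  have "i1 \<noteq> i2" using i assms(3) mem_E_iff by blast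
  moreover have "P ! i1 = j"
  proof (rule ccontr)
    assume "P ! i1 \<noteq> j"
    then have "(i1, j) \<in> S" using i(1) by (auto simp: skew_cells_def)
    then show False using i(1) assms(3) mem_E_iff by blast
  qed
  ultimately show ?thesis using that i by simp
qed

lemma E_subset_if_bumps:
  assumes D: "D \<subseteq> {a..<b}" and run: "bumps (sorted_list_of_set D @ rev (inc_part D)) P = Some \<beta>"
  shows "E \<subseteq> D"
proof
  fix j assume "j \<in> E"
  then obtain i where i: "(i, j) \<in> S" "(i, Suc j) \<in> S" using mem_E_iff by blast
  then have il: "i < length \<beta>" "P ! i < j" "Suc j \<le> \<beta> ! i" by (auto simp: skew_cells_def)
  obtain u where u: "bumps (sorted_list_of_set D) P = Some u" "bumps (rev (inc_part D)) u = Some \<beta>"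
    using run by (rule bumps_appendE)
  have "length u = length \<beta>" using bumps_grow[OF u(1)] length_aligned by simp
  then have "\<beta> ! i \<le> Suc (u ! i)"
    using bumps_nth_le_Suc[OF u(2)] sorted_inc_part il(1) by simp
  show "j \<in> D"
  proof (rule ccontr)
    assume "j \<notin> D"
    then have "u ! i < j"
      using bumps_nth_less[OF u(1)] il D finite_subset length_aligned by fastforce
    with \<open>\<beta> ! i \<le> Suc (u ! i)\<close> il(3) show False by simp
  qed
qed

text \<open>Setting for an ascent \<open>j \<notin> E \<union> NE\<close>: the ascending letters below \<open>j\<close> lead to \<open>u\<^sub>1\<close>, and the
  letter \<open>j\<close> then acts on row \<open>r\<close>.\<close>

context
  fixes D :: "nat set" and ds1 ds2 :: "nat list" and j r :: nat and u1 :: "nat list"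
  assumes D: "D \<subseteq> {a..<b}" and ds: "sorted_list_of_set D = ds1 @ j # ds2"
    and u1: "bumps ds1 P = Some u1" and rest: "bumps (ds2 @ rev (inc_part D)) (u1[r := j]) = Some \<beta>"
    and r: "r < length \<beta>" "u1 ! r = j - 1" "1 \<le> j"
    and r_first: "\<And>i. j \<noteq> 1 \<Longrightarrow> i < length \<beta> \<Longrightarrow> u1 ! i = j - 1 \<Longrightarrow> r \<le> i"
    and jE: "j \<notin> E"
begin

lemma ds_below: "d \<in> set ds1 \<Longrightarrow> d < j" and ds_above: "d \<in> set ds2 \<Longrightarrow> j < d"
proof -
  have "sorted_wrt (<) (sorted_list_of_set D)" by simp
  then have "sorted_wrt (<) (ds1 @ j # ds2)" by (simp only: ds)
  then have "\<forall>x\<in>set ds1. x < j" "\<forall>y\<in>set ds2. j < y" by (simp_all add: sorted_wrt_append)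
  then show "d \<in> set ds1 \<Longrightarrow> d < j" "d \<in> set ds2 \<Longrightarrow> j < d" by simp_all
qed

lemma length_u1: "length u1 = length \<beta>"
  using bumps_grow[OF u1] length_aligned by simp

lemma aligned_le_u1: "i < length \<beta> \<Longrightarrow> P ! i \<le> u1 ! i"
  using bumps_grow[OF u1] length_aligned by simp

lemma row_i2_reaches_pred:
  assumes i2: "(i2, j) \<in> S" and "r \<noteq> i2"
  shows "j - 1 \<le> u1 ! i2"
proof (rule ccontr)
  assume lt: "\<not> j - 1 \<le> u1 ! i2"
  have i2l: "i2 < length \<beta>" "j \<le> \<beta> ! i2" using i2 by (auto simp: skew_cells_def)
  obtain u where u: "bumps ds2 (u1[r := j]) = Some u" "bumps (rev (inc_part D)) u = Some \<beta>"
    using rest by (rule bumps_appendE)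
  have "Suc (u1 ! i2) \<notin> set ds2" using lt ds_above by fastforce
  then have "u ! i2 = u1 ! i2"
    using bumps_nth_unchanged[OF u(1), of i2] i2l \<open>r \<noteq> i2\<close> by (simp add: length_u1)
  moreover have "length u = length \<beta>" using bumps_grow[OF u(1)] by (simp add: length_u1)
  then have "\<beta> ! i2 \<le> Suc (u ! i2)"
    using bumps_nth_le_Suc[OF u(2)] sorted_inc_part i2l(1) by simp
  ultimately show False using lt i2l(2) by simp
qed

lemma bumped_row_above:
  assumes i2: "(i2, j) \<in> S" "i2 < i1" and i1: "i1 < length \<beta>" "P ! i1 = j"
  shows "r < i1"
proof (cases "j = 1")
  case True
  then have "P ! r = 0" using aligned_le_u1[OF r(1)] r(2) by simp
  then show ?thesis using aligned_eq_0_iff r(1) i1 True by fastforce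
next
  case False
  have i2l: "i2 < length \<beta>" "P ! i2 < j" using i2 by (auto simp: skew_cells_def)
  have "r \<le> i2"
  proof (cases "r = i2")
    case False
    have "u1 ! i2 < j" using bumps_nth_less[OF u1] i2l ds_below length_aligned by fastforce
    with row_i2_reaches_pred[OF i2(1) False] have "u1 ! i2 = j - 1" by simp
    then show ?thesis using r_first \<open>j \<noteq> 1\<close> i2l(1) by simp
  qed simp
  then show ?thesis using i2(2) by simp
qed

lemma bumped_row_length: "\<beta> ! r = j"
proof -
  have "\<forall>i<length \<beta>. u1[r := j] ! i \<le> \<beta> ! i" using bumps_grow[OF rest] by (simp add: length_u1)
  then have "u1[r := j] ! r \<le> \<beta> ! r" using r(1) by blast
  then have "j \<le> \<beta> ! r" using r(1) by (simp add: length_u1)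
  moreover have "\<not> Suc j \<le> \<beta> ! r"
  proof
    assume "Suc j \<le> \<beta> ! r"
    moreover have "P ! r < j" using aligned_le_u1[OF r(1)] r(2,3) by simp
    ultimately have "(r, j) \<in> S" "(r, Suc j) \<in> S" using r(1) by (auto simp: skew_cells_def)
    then show False using jE mem_E_iff by blast
  qed
  ultimately show ?thesis by simp
qed

text \<open>Row \<open>r\<close> keeps the length \<open>j\<close>, so the lower row \<open>i\<^sub>1\<close> of length \<open>j\<close> can never receive its
  box in column \<open>j + 1\<close>.\<close>

lemma no_crossing_rows:
  assumes "(i1, Suc j) \<in> S" "(i2, j) \<in> S" "i2 < i1" "P ! i1 = j"
  shows False
proof -
  have i1: "i1 < length \<beta>" "Suc j \<le> \<beta> ! i1" using assms(1) by (auto simp: skew_cells_def)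
  have "r < i1" using bumped_row_above[OF assms(2,3) i1(1) assms(4)] .
  have "Suc (P ! i1) \<notin> set ds1" using ds_below assms(4) by fastforce
  then have "u1 ! i1 = j" using bumps_nth_unchanged[OF u1, of i1] i1(1) assms(4) length_aligned by simp
  then have "u1[r := j] ! i1 \<le> j" using \<open>r < i1\<close> by simp
  then have "\<beta> ! i1 \<le> j"
    using bumps_nth_le_below[OF rest \<open>r < i1\<close>, of j] i1(1) r bumped_row_length by (simp add: length_u1)
  with i1(2) show False by simp
qed

end

lemma E_NE_cover_if_bumps:
  assumes D: "D \<subseteq> {a..<b}" and run: "bumps (sorted_list_of_set D @ rev (inc_part D)) P = Some \<beta>"
  shows "D \<subseteq> E \<union> NE"
proof
  fix j assume j: "j \<in> D"
  show "j \<in> E \<union> NE"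
  proof (rule ccontr)
    assume "j \<notin> E \<union> NE"
    then have jE: "j \<notin> E" "j \<notin> NE" by auto
    have jab: "a \<le> j" "j < b" using j D by auto
    obtain i1 i2 where i: "(i1, Suc j) \<in> S" "(i2, j) \<in> S" "i2 < i1" "P ! i1 = j"
      by (rule crossing_rows[OF jab jE])
    have "finite D" using D finite_subset by blast
    then have "j \<in> set (sorted_list_of_set D)" using j by simp
    then obtain ds1 ds2 where ds: "sorted_list_of_set D = ds1 @ j # ds2"
      by (meson split_list)
    have "bumps (ds1 @ j # (ds2 @ rev (inc_part D))) P = Some \<beta>" using run ds by simp
    then obtain u1 where u1: "bumps ds1 P = Some u1" "bumps (j # ds2 @ rev (inc_part D)) u1 = Some \<beta>"
      by (rule bumps_appendE)
    then obtain u2 where u2: "bump j u1 = Some u2" "bumps (ds2 @ rev (inc_part D)) u2 = Some \<beta>"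
      by (elim bumps_ConsE)
    have "length u1 = length \<beta>" using bumps_grow[OF u1(1)] length_aligned by simp
    from bump_SomeD[OF u2(1)] obtain r where r: "r < length u1" "u1 ! r = j - 1" "u2 = u1[r := j]"
      "1 \<le> j" "j \<noteq> 1 \<longrightarrow> (\<forall>i<length u1. u1 ! i = j - 1 \<longrightarrow> r \<le> i)"
      by blast
    have first: "r \<le> i" if "j \<noteq> 1" "i < length \<beta>" "u1 ! i = j - 1" for i
      using r(5) that \<open>length u1 = length \<beta>\<close> by simp
    have rest: "bumps (ds2 @ rev (inc_part D)) (u1[r := j]) = Some \<beta>" using u2(2) r(3) by simp
    show False
      using no_crossing_rows[OF D ds u1(1) rest _ r(2,4) first jE(1) i] r(1) \<open>length u1 = length \<beta>\<close>
      by simp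
  qed
qed

lemma bumps_hookword_iff_admissible:
  assumes "D \<subseteq> {a..<b}"
  shows "bumps (sorted_list_of_set D @ rev (inc_part D)) P = Some \<beta> \<longleftrightarrow> admissible D"
proof
  assume run: "bumps (sorted_list_of_set D @ rev (inc_part D)) P = Some \<beta>"
  show "admissible D"
    unfolding admissible_def using E_subset_if_bumps[OF assms run] E_NE_cover_if_bumps[OF assms run]
    by blast
qed (use bumps_admissible assms in blast)

end

section \<open>Reverse hookwords\<close>

lemma rev_hookword_unique: "is_rev_hookword w k \<Longrightarrow> is_rev_hookword w k' \<Longrightarrow> k = k'"
proof -
  have "\<not> k < k'" if "is_rev_hookword w k" "is_rev_hookword w k'" for k k'
  proof
    assume "k < k'"
    with that have "w ! k \<le> w ! (k + 1)" "w ! k > w ! (k + 1)" by (auto simp: is_rev_hookword_def)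
    then show False by simp
  qed
  then show "is_rev_hookword w k \<Longrightarrow> is_rev_hookword w k' \<Longrightarrow> k = k'"
    by (meson linorder_neqE_nat)
qed

lemma asc_eqI: "is_rev_hookword w k \<Longrightarrow> asc w = k"
  unfolding asc_def using rev_hookword_unique by blast

lemma is_rev_hookword_append:
  assumes "sorted xs" "xs \<noteq> []" "sorted_wrt (>) ys" "\<forall>y\<in>set ys. y < last xs"
  shows "is_rev_hookword (xs @ ys) (length xs - 1)"
proof -
  have last: "(xs @ ys) ! (length xs - 1) = last xs" using assms(2) by (simp add: nth_append last_conv_nth)
  have "(xs @ ys) ! j \<le> (xs @ ys) ! (j + 1)" if "j < length xs - 1" for j
  proof -
    from that have "Suc j < length xs" by simp
    then show ?thesis using assms(1) by (simp add: nth_append sorted_iff_nth_mono)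
  qed
  moreover have "(xs @ ys) ! j > (xs @ ys) ! (j + 1)"
    if "length xs - 1 \<le> j" "j + 1 < length (xs @ ys)" for j
  proof (cases "j = length xs - 1")
    case True
    then show ?thesis using that assms(2,4) last by (simp add: nth_append)
  next
    case False
    then have "length xs \<le> j" using that(1) by simp
    then show ?thesis
      using that(2) sorted_wrt_nth_less[OF assms(3), of "j - length xs" "Suc (j - length xs)"]
      by (simp add: nth_append Suc_diff_le)
  qed
  moreover have "length xs - 1 < length (xs @ ys)" using assms(2) by (cases xs) auto
  ultimately show ?thesis unfolding is_rev_hookword_def by auto
qed

lemma rev_hookword_parts:
  assumes "is_rev_hookword w k"
  shows "sorted (take (Suc k) w)" "sorted_wrt (>) (drop (Suc k) w)"
    "\<forall>x\<in>set (drop (Suc k) w). x < w ! k"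
proof -
  have k: "k < length w" and inc: "\<And>j. j < k \<Longrightarrow> w ! j \<le> w ! Suc j"
    and dec: "\<And>j. k \<le> j \<Longrightarrow> Suc j < length w \<Longrightarrow> w ! Suc j < w ! j"
    using assms by (auto simp: is_rev_hookword_def)
  show "sorted (take (Suc k) w)"
    unfolding sorted_iff_nth_Suc using inc by simp
  have "w ! j < w ! i" if "k \<le> i" "i < j" "j < length w" for i j
    using that
  proof (induction j)
    case (Suc j)
    then have "w ! Suc j < w ! j" using dec by simp
    then show ?case using Suc by (cases "i = j") auto
  qed simp
  then show "sorted_wrt (>) (drop (Suc k) w)" "\<forall>x\<in>set (drop (Suc k) w). x < w ! k"
    by (auto simp: sorted_wrt_iff_nth_less in_set_conv_nth)
qed

lemma sorted_eq_if_count_list_eq: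
  fixes xs ys :: "'a :: linorder list"
  assumes "sorted xs" "sorted ys" "\<And>z. count_list xs z = count_list ys z"
  shows "xs = ys"
proof -
  have "count (mset xs) z = count (mset ys) z" for z
    using assms(3)[of z] by (simp add: count_mset count_list_eq_length_filter)
  then have "mset xs = mset ys" by (simp add: multiset_eq_iff)
  then have "sort ys = xs" using properties_for_sort assms(1) by blast
  then show ?thesis using sorted_sort_id[OF assms(2)] by simp
qed

lemma count_list_distinct: "distinct xs \<Longrightarrow> count_list xs z = (if z \<in> set xs then 1 else 0)"
  by (induction xs) auto

lemma count_list_concat_replicate_upt:
  "count_list (concat (map (\<lambda>j. replicate (f j) j) [x..<y])) z = (if x \<le> z \<and> z < y then f z else 0)"
proof -
  have rep: "count_list (replicate n j) z = (if j = z then n else 0)" for n j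
    by (induction n) auto
  show ?thesis
  proof (induction y)
    case (Suc y)
    then show ?case by (cases "x \<le> y") (auto simp: rep)
  qed simp
qed

lemma sum_Pow_neg_one_power_card:
  "finite A \<Longrightarrow> (\<Sum>X\<in>Pow A. (-1::int) ^ card X) = (if card A = 0 then 1 else 0)"
  using prod_diff_conv_sum[of A "\<lambda>_. 1::int" "\<lambda>_. 1"] by (simp add: power_0_left)

section \<open>The hookwords acting as \<open>\<alpha> \<mapsto> \<beta>\<close>\<close>

context nc_strip
begin

definition hookword :: "nat set \<Rightarrow> nat list" where
  "hookword D = inc_part D @ rev (sorted_list_of_set D)"

lemma card_col_pos: "a \<le> j \<Longrightarrow> j \<le> b \<Longrightarrow> 1 \<le> card (col j)"
  using col_nonempty_iff[of j] finite_col[of j] by (auto simp: Suc_le_eq card_gt_0_iff)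

lemma count_list_inc_part:
  "count_list (inc_part D) z = (if a \<le> z \<and> z \<le> b then inc_mult D z else 0)"
  unfolding inc_part_def count_list_concat_replicate_upt by auto

lemma set_inc_part: "set (inc_part D) \<subseteq> {a..b}"
  using count_list_inc_part count_list_0_iff by (fastforce split: if_splits)

lemma mem_inc_part: "a \<le> z \<Longrightarrow> z \<le> b \<Longrightarrow> z \<notin> D \<Longrightarrow> z \<in> set (inc_part D)"
proof -
  assume z: "a \<le> z" "z \<le> b" "z \<notin> D"
  then have "count_list (inc_part D) z = card (col z)" by (simp add: count_list_inc_part inc_mult_def)
  then have "count_list (inc_part D) z \<noteq> 0" using card_col_pos[OF z(1,2)] by simp
  then show ?thesis using count_list_0_iff by metis
qed

lemma b_in_inc_part: "D \<subseteq> {a..<b} \<Longrightarrow> b \<in> set (inc_part D)"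
proof -
  assume "D \<subseteq> {a..<b}"
  then have "b \<notin> D" by auto
  then show ?thesis by (rule mem_inc_part[OF a_le_b order_refl])
qed

lemma last_inc_part: "D \<subseteq> {a..<b} \<Longrightarrow> last (inc_part D) = b"
proof -
  assume "D \<subseteq> {a..<b}"
  then have "b \<in> set (inc_part D)" by (rule b_in_inc_part)
  then obtain m where m: "m < length (inc_part D)" "inc_part D ! m = b" by (auto simp: in_set_conv_nth)
  then have ne: "inc_part D \<noteq> []" by auto
  then have "last (inc_part D) \<in> {a..b}" using set_inc_part last_in_set by blast
  moreover have "b \<le> last (inc_part D)"
    using m ne sorted_nth_mono[OF sorted_inc_part, of m "length (inc_part D) - 1" D]
    by (simp add: last_conv_nth)
  ultimately show ?thesis by simp
qed

lemma card_S: "card S = (\<Sum>j\<in>{a..b}. card (col j))"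
proof -
  have "S = (\<Union>j\<in>{a..b}. (\<lambda>i. (i, j)) ` col j)"
    using supp_S by (force simp: mem_S_iff)
  also have "card \<dots> = (\<Sum>j\<in>{a..b}. card ((\<lambda>i. (i, j)) ` col j))"
    by (rule card_UN_disjoint) (auto simp: finite_col)
  finally show ?thesis by (simp add: card_image inj_on_def)
qed

lemma length_inc_part: "D \<subseteq> {a..<b} \<Longrightarrow> length (inc_part D) + card D = card S"
proof -
  assume D: "D \<subseteq> {a..<b}"
  have "length (inc_part D) = (\<Sum>j\<in>{a..b}. count_list (inc_part D) j)"
    using sum_count_set[of "inc_part D" "{a..b}"] set_inc_part by simp
  also have "\<dots> = (\<Sum>j\<in>{a..b}. inc_mult D j)" by (simp add: count_list_inc_part)
  moreover have "{a..b} \<inter> D = D" using D by auto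
  then have "(\<Sum>j\<in>{a..b}. if j \<in> D then 1 else 0) = card D" by (simp add: sum.If_cases)
  ultimately have "length (inc_part D) + card D
      = (\<Sum>j\<in>{a..b}. inc_mult D j) + (\<Sum>j\<in>{a..b}. if j \<in> D then 1 else 0)"
    by simp
  also have "\<dots> = (\<Sum>j\<in>{a..b}. card (col j))"
  proof -
    have "inc_mult D j + (if j \<in> D then 1 else 0) = card (col j)" if "j \<in> {a..b}" for j
      using card_col_pos[of j] that by (auto simp: inc_mult_def)
    then show ?thesis by (simp add: sum.distrib[symmetric])
  qed
  finally show ?thesis by (simp add: card_S)
qed

lemma hookword_rev_hookword:
  assumes "D \<subseteq> {a..<b}"
  shows "is_rev_hookword (hookword D) (length (inc_part D) - 1)"
  unfolding hookword_def
proof (rule is_rev_hookword_append[OF sorted_inc_part])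
  show "inc_part D \<noteq> []" using b_in_inc_part[OF assms] by auto
  have "finite D" using assms finite_subset by blast
  then show "sorted_wrt (>) (rev (sorted_list_of_set D))" "\<forall>y\<in>set (rev (sorted_list_of_set D)). y < last (inc_part D)"
    using assms last_inc_part[OF assms] by (auto simp: sorted_wrt_rev)
qed

lemma asc_hookword: "D \<subseteq> {a..<b} \<Longrightarrow> asc (hookword D) = card S - 1 - card D"
proof -
  assume D: "D \<subseteq> {a..<b}"
  have "asc (hookword D) = length (inc_part D) - 1" by (rule asc_eqI[OF hookword_rev_hookword[OF D]])
  then show ?thesis using length_inc_part[OF D] by simp
qed

lemma set_hookword: "D \<subseteq> {a..<b} \<Longrightarrow> set (hookword D) = {a..b}"
proof -
  assume D: "D \<subseteq> {a..<b}"
  then have "finite D" using finite_subset by blast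
  then show ?thesis
    using D set_inc_part mem_inc_part by (fastforce simp: hookword_def)
qed

lemma hookword_CRHW: "D \<subseteq> {a..<b} \<Longrightarrow> hookword D \<in> CRHW (card S)"
proof -
  assume D: "D \<subseteq> {a..<b}"
  have "finite D" using D finite_subset by blast
  then have "length (hookword D) = card S" using length_inc_part[OF D] by (simp add: hookword_def)
  then show ?thesis
    using set_hookword[OF D] hookword_rev_hookword[OF D] one_le_a by (auto simp: CRHW_def)
qed

lemma word_act_iff_bumps_P:
  "\<forall>c\<in>set w. 1 \<le> c \<Longrightarrow> word_act w \<alpha> = Some \<beta> \<longleftrightarrow> bumps (rev w) P = Some \<beta>"
  using word_act_iff_bumps[OF composition composition_\<beta> length_le] by (simp add: aligned_def)

lemma hookword_act_iff: "D \<subseteq> {a..<b} \<Longrightarrow> word_act (hookword D) \<alpha> = Some \<beta> \<longleftrightarrow> admissible D"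
proof -
  assume D: "D \<subseteq> {a..<b}"
  have "\<forall>c\<in>set (hookword D). 1 \<le> c" using set_hookword[OF D] one_le_a by auto
  moreover have "rev (hookword D) = sorted_list_of_set D @ rev (inc_part D)" by (simp add: hookword_def)
  ultimately show ?thesis using word_act_iff_bumps_P bumps_hookword_iff_admissible[OF D] by simp
qed

lemma inj_on_hookword: "inj_on hookword (Pow {a..<b})"
proof (rule inj_on_inverseI)
  fix D assume "D \<in> Pow {a..<b}"
  then have D: "D \<subseteq> {a..<b}" by simp
  have "Suc (asc (hookword D)) = length (inc_part D)"
    using asc_eqI[OF hookword_rev_hookword[OF D]] b_in_inc_part[OF D] by (cases "inc_part D") auto
  then show "set (drop (Suc (asc (hookword D))) (hookword D)) = D"
    using D finite_subset[of D] by (simp add: hookword_def)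
qed

lemma count_list_if_word_act:
  assumes "\<forall>c\<in>set w. 1 \<le> c" "word_act w \<alpha> = Some \<beta>"
  shows "count_list w j = card (col j)"
proof (cases "j = 0")
  case True
  then show ?thesis using assms(1) by (auto simp: col_def)
next
  case False
  have run: "bumps (rev w) P = Some \<beta>" using assms word_act_iff_bumps_P by blast
  let ?A = "{i. i < length \<beta> \<and> j \<le> P ! i}"
  have "{i. i < length \<beta> \<and> j \<le> \<beta> ! i} = ?A \<union> col j"
    using aligned_le by (auto simp: col_def intro: le_trans)
  moreover have "?A \<inter> col j = {}" by (auto simp: col_def)
  ultimately have "card {i. i < length \<beta> \<and> j \<le> \<beta> ! i} = card ?A + card (col j)"
    using finite_col[of j] by (simp add: card_Un_disjoint)
  moreover have "card {i. i < length \<beta> \<and> j \<le> \<beta> ! i} = card ?A + count_list (rev w) j"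
    using card_bumps_ge[OF run, of j] False length_aligned by simp
  ultimately show ?thesis by simp
qed

lemma word_is_hookword:
  assumes w: "w \<in> CRHW (card S)" and act: "word_act w \<alpha> = Some \<beta>"
  obtains D where "D \<subseteq> {a..<b}" "w = hookword D"
proof -
  obtain k where k: "is_rev_hookword w k" using w by (auto simp: CRHW_def)
  have letters: "\<forall>c\<in>set w. 1 \<le> c" using w by (auto simp: CRHW_def)
  note count = count_list_if_word_act[OF letters act]
  have set_w: "set w \<subseteq> {a..b}"
    using count col_nonempty_iff count_list_0_iff by fastforce
  define D where "D = set (drop (Suc k) w)"
  have kl: "k < length w" using k by (simp add: is_rev_hookword_def)
  note parts = rev_hookword_parts[OF k]
  have D_sub: "D \<subseteq> {a..<b}"
  proof
    fix x assume "x \<in> D"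
    then have "x \<in> set w" "x < w ! k" using parts(3) in_set_dropD by (auto simp: D_def)
    moreover have "w ! k \<le> b" using set_w kl nth_mem by fastforce
    ultimately show "x \<in> {a..<b}" using set_w by fastforce
  qed
  have "sorted_wrt (<) (rev (drop (Suc k) w))" using parts(2) by (simp add: sorted_wrt_rev)
  then have inc: "sorted (rev (drop (Suc k) w))" "distinct (rev (drop (Suc k) w))"
    by (simp_all add: strict_sorted_iff)
  then have dist: "distinct (drop (Suc k) w)" by simp
  have "sorted_list_of_set D = rev (drop (Suc k) w)"
    using sorted_list_of_set.idem_if_sorted_distinct[OF inc] by (simp add: D_def)
  then have drop: "drop (Suc k) w = rev (sorted_list_of_set D)" by simp
  have "take (Suc k) w = inc_part D"
  proof (rule sorted_eq_if_count_list_eq[OF parts(1) sorted_inc_part])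
    fix z
    have "count_list (drop (Suc k) w) z = (if z \<in> D then 1 else 0)"
      using dist by (simp add: D_def count_list_distinct)
    moreover have "count_list w z = count_list (take (Suc k) w) z + count_list (drop (Suc k) w) z"
      by (metis append_take_drop_id count_list_append)
    ultimately show "count_list (take (Suc k) w) z = count_list (inc_part D) z"
      using count[of z] count_list_inc_part[of D z] col_nonempty_iff[of z]
      by (auto simp: inc_mult_def)
  qed
  then have "w = hookword D" using drop by (metis append_take_drop_id hookword_def)
  then show ?thesis using that D_sub by blast
qed

end

context nc_strip
begin

lemma admissible_subset: "admissible D \<Longrightarrow> D \<subseteq> {a..<b}"
  using E_subset NE_subset by (auto simp: admissible_def)

lemma words_eq_hookwords:
  "{w \<in> CRHW (card S). word_act w \<alpha> = Some \<beta>} = hookword ` {D. admissible D}"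
proof
  show "{w \<in> CRHW (card S). word_act w \<alpha> = Some \<beta>} \<subseteq> hookword ` {D. admissible D}"
  proof
    fix w assume "w \<in> {w \<in> CRHW (card S). word_act w \<alpha> = Some \<beta>}"
    then have w: "w \<in> CRHW (card S)" "word_act w \<alpha> = Some \<beta>" by auto
    obtain D where D: "D \<subseteq> {a..<b}" "w = hookword D" by (rule word_is_hookword[OF w])
    then have "admissible D" using hookword_act_iff w(2) by simp
    then show "w \<in> hookword ` {D. admissible D}" using D by blast
  qed
  show "hookword ` {D. admissible D} \<subseteq> {w \<in> CRHW (card S). word_act w \<alpha> = Some \<beta>}"
    using hookword_CRHW hookword_act_iff admissible_subset by auto
qed

lemma admissible_eq_image: "{D. admissible D} = (\<union>) E ` Pow NE"
proof
  show "{D. admissible D} \<subseteq> (\<union>) E ` Pow NE"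
  proof
    fix D assume "D \<in> {D. admissible D}"
    then have "D = E \<union> (D - E)" "D - E \<in> Pow NE" by (auto simp: admissible_def)
    then show "D \<in> (\<union>) E ` Pow NE" by blast
  qed
qed (auto simp: admissible_def)

lemma inj_on_union_E: "inj_on ((\<union>) E) (Pow NE)"
  using E_NE_disjoint by (intro inj_on_inverseI[where g = "\<lambda>D. D - E"]) auto

lemma card_E_NE_le: "card E + card NE \<le> card S - 1"
proof -
  have "finite E" "finite NE" using E_subset NE_subset finite_subset by blast+
  then have "card E + card NE = card (E \<union> NE)" using E_NE_disjoint by (simp add: card_Un_disjoint)
  also have "\<dots> \<le> card {a..<b}" using E_subset NE_subset by (intro card_mono) auto
  also have "\<dots> < card {a..b}" using a_le_b by simp
  also have "card {a..b} \<le> card S"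
  proof -
    have "(\<Sum>j\<in>{a..b}. 1) \<le> (\<Sum>j\<in>{a..b}. card (col j))"
      by (rule sum_mono) (use card_col_pos in auto)
    then show ?thesis by (simp add: card_S)
  qed
  finally show ?thesis by simp
qed

lemma sign_union_E:
  assumes "X \<subseteq> NE"
  shows "(-1::int) ^ (card S - 1 - card (E \<union> X)) = (-1) ^ (card S - 1 - card E) * (-1) ^ card X"
proof -
  have "finite E" "finite NE" using E_subset NE_subset finite_subset by blast+
  with assms have "card (E \<union> X) = card E + card X" "card X \<le> card NE"
    using E_NE_disjoint finite_subset[OF assms] by (auto intro: card_Un_disjoint card_mono)
  define N where "N = card S - 1 - card E"
  have "card S - 1 - card (E \<union> X) = N - card X" "card X \<le> N"
    using card_E_NE_le \<open>card (E \<union> X) = card E + card X\<close> \<open>card X \<le> card NE\<close>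
    unfolding N_def by simp_all
  moreover have "(-1::int) ^ (N - card X) = (-1) ^ (N + card X)" if "card X \<le> N"
    using neg_one_power_add_eq_neg_one_power_diff[where 'a = int, OF that] by simp
  ultimately show ?thesis unfolding N_def[symmetric] by (simp add: power_add)
qed

theorem alternating_sum:
  "(\<Sum>w\<in>{w \<in> CRHW (card S). word_act w \<alpha> = Some \<beta>}. (-1::int) ^ asc w)
     = (-1) ^ (card S - 1 - card E) * (if card NE = 0 then 1 else 0)"
proof -
  have inj: "inj_on hookword {D. admissible D}"
    using inj_on_hookword by (rule inj_on_subset) (use admissible_subset in auto)
  have "(\<Sum>w\<in>{w \<in> CRHW (card S). word_act w \<alpha> = Some \<beta>}. (-1::int) ^ asc w)
      = (\<Sum>D\<in>{D. admissible D}. (-1) ^ (card S - 1 - card D))"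
    unfolding words_eq_hookwords using admissible_subset asc_hookword
    by (simp add: sum.reindex[OF inj])
  also have "\<dots> = (\<Sum>X\<in>Pow NE. (-1) ^ (card S - 1 - card E) * (-1) ^ card X)"
    unfolding admissible_eq_image using sign_union_E by (simp add: sum.reindex[OF inj_on_union_E])
  also have "\<dots> = (-1) ^ (card S - 1 - card E) * (if card NE = 0 then 1 else 0)"
    using NE_subset finite_subset[of NE]
    by (simp add: sum_distrib_left[symmetric] sum_Pow_neg_one_power_card)
  finally show ?thesis .
qed

end

theorem mainTheorem18:
  fixes \<alpha> \<beta> :: "nat list" and n :: nat
  assumes "is_composition \<alpha>"
    and "comp_less \<alpha> \<beta>"
    and "nc_border_strip (skew \<beta> \<alpha>)"
    and "card (skew \<beta> \<alpha>) = n"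
  shows "(\<Sum>w\<in>{w \<in> CRHW n. word_act w \<alpha> = Some \<beta>}. (-1::int) ^ asc w)
         = (-1::int) ^ (n - 1 - card (E_set (skew \<beta> \<alpha>)))
           * (if card (NE_set (skew \<beta> \<alpha>)) = 0 then 1 else 0)"
proof -
  have "shape_inv \<alpha> \<beta>" "\<alpha> \<noteq> \<beta>" using comp_less_shape_inv[OF assms(1,2)] by auto
  then interpret nc_strip \<alpha> \<beta> using assms(1,3) by unfold_locales
  have "inj (apfst Suc :: nat \<times> nat \<Rightarrow> nat \<times> nat)" by simp
  then have "card (skew \<beta> \<alpha>) = card S"
    unfolding skew_eq by (rule card_image[OF inj_on_subset[OF _ subset_UNIV]])
  moreover have "E_set (skew \<beta> \<alpha>) = E" "NE_set (skew \<beta> \<alpha>) = NE"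
    unfolding skew_eq by (simp_all add: E_set_apfst_Suc NE_set_apfst_Suc)
  ultimately show ?thesis using alternating_sum assms(4) by simp
qed

end
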